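(* Let $(\mathcal H,\mathcal B)$ be a commutative nondegenerate combinatorial Hopf algebra over $\mathbb R$, let $\gamma\in(0,1]$ and $N:=\lfloor 1/\gamma\rfloor$. Then every $\gamma$-regular $N$-truncated $\mathcal H$-rough path admits a unique extension to a $\gamma$-regular $\mathcal H$-rough path $\mathbb X$. Moreover, there exists a constant $c>0$ such that $$|\langle\mathbb X_{st},\sigma\rangle|\le c^{|\sigma|}\,q_\gamma(\sigma)\,|t-s|^{\gamma|\sigma|}$$ for all $s,t\in\mathbb R$ and all $\sigma\in\mathcal B$.
   Context: A connected graded Hopf algebra $\mathcal H=\bigoplus_{n\ge0}\mathcal H_n$ has $\mathcal H_0=\mathbb R\mathbf 1$; $|\sigma|$ is the degree of a homogeneous $\sigma$; reduced coproduct $\Delta'(\sigma)=\Delta(\sigma)-\sigma\otimes\mathbf 1-\mathbf 1\otimes\sigma=\sum'_{(\sigma)}\sigma'\otimes\sigma''$ (homogeneous components); convolution $(\phi*\psi)(x)=\sum_{(x)}\phi(x_1)\psi(x_2)$. A combinatorial Hopf algebra $(\mathcal H,\mathcal B)$ is a connected graded Hopf algebra with a basis $\mathcal B=\bigsqcup_n\mathcal B_n$, $\mathcal B_n$ a basis of $\mathcal H_n$, such that $\dim\mathcal H_n\le bC^n$ for some constants $b,C>0$, and the structure constants of product and coproduct in this basis are nonnegative integers. Its inverse-factorial character $q$ is the linear form with $q(\mathbf 1)=1$, $q(\tau)=1$ for $\tau\in\mathcal B_1$, and $q(x)=\frac{1}{2^{|x|}-2}\sum'_{(x)}q(x')q(x'')$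 for homogeneous $x$ of degree $\ge2$. It is nondegenerate if $\mathcal B\cap\mathrm{Prim}(\mathcal H)=\mathcal B_1$. The map $q_\gamma:\mathcal H\to\mathbb R$ is the linear map defined on $\mathcal B$ by $q_\gamma(\sigma)=q(\sigma)$ if $|\sigma|\le N$ and recursively $q_\gamma(\sigma)=\frac{1}{2^{\gamma|\sigma|}-2}\sum'_{(\sigma)}q_\gamma(\sigma')q_\gamma(\sigma'')$ if $|\sigma|\ge N+1$ (note $\gamma(N+1)>1$). A $\gamma$-regular $\mathcal H$-rough path is a family $(\mathbb X_{st})_{s,t\in\mathbb R}$ of linear forms on $\mathcal H$ with $\langle\mathbb X_{st},\mathbf 1\rangle=1$ such that (I) $\langle\mathbb X_{st},\sigma\tau\rangle=\langle\mathbb X_{st},\sigma\rangle\langle\mathbb X_{st},\tau\rangle$ for all $\sigma,\tau\in\mathcal H$; (II) $\mathbb X_{su}*\mathbb X_{ut}=\mathbb X_{st}$ for all $s,u,t$; (III) $\sup_{s\neq t}|\langle\mathbb X_{st},\sigma\rangle|/|t-s|^{\gamma|\sigma|}<\infty$ for every $\sigma\in\mathcal B$. With $\mathcal H^{(N)}=\bigoplus_{k\le N}\mathcal H_k$, a $\gamma$-regular $N$-truncated $\mathcal H$-rough path is a family of linear forms on $\mathcal H^{(N)}$ with $\langle\mathbb X_{st},\mathbf 1\rangle=1$ satisfying (I) for $\sigma\in\mathcal H_p,\tau\in\mathcal H_q$ with $p+q\le N$, (II) with the coproduct restricted to $\mathcal H^{(N)}$, and (III) for $\sigma\in\mathcal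 B_n$, $n\le N$. An extension means a $\gamma$-regular $\mathcal H$-rough path whose restriction to $\mathcal H^{(N)}$ is the given truncated one. *)

theory Defs
  imports Complex_Main
begin

text \<open>
A combinatorial Hopf algebra is represented through its basis: elements of a type 'b,
a degree function deg, the unit basis element one, and nonnegative integer structure constants
  mult a b c   = coefficient of c in the product a b,
  comult a b c = coefficient of a (x) b in the coproduct of c.
The Hopf algebra itself is the real span of the basis; a linear form on it is the same as a
function 'b => real (its values on the basis).
\<close>

definition Bn :: "('b \<Rightarrow> nat) \<Rightarrow> nat \<Rightarrow> 'b set" where
  "Bn deg n = {x. deg x = n}"

definition Ble :: "('b \<Rightarrow> nat) \<Rightarrow> nat \<Rightarrow> 'b set" where
  "Ble deg n = {x. deg x \<le> n}"

definition comb_hopf ::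
  "'b \<Rightarrow> ('b \<Rightarrow> nat) \<Rightarrow> ('b \<Rightarrow> 'b \<Rightarrow> 'b \<Rightarrow> nat) \<Rightarrow> ('b \<Rightarrow> 'b \<Rightarrow> 'b \<Rightarrow> nat) \<Rightarrow> bool" where
  "comb_hopf one deg mult comult \<longleftrightarrow>
     (\<forall>n. finite (Bn deg n)) \<and>
     (\<exists>b0 C::real. b0 > 0 \<and> C > 0 \<and> (\<forall>n. real (card (Bn deg n)) \<le> b0 * C ^ n)) \<and>
     Bn deg 0 = {one} \<and>
     (\<forall>a b c. mult a b c \<noteq> 0 \<longrightarrow> deg c = deg a + deg b) \<and>
     (\<forall>a b c. comult a b c \<noteq> 0 \<longrightarrow> deg a + deg b = deg c) \<and>
     (\<forall>a c. mult one a c = (if c = a then 1 else 0) \<and> mult a one c = (if c = a then 1 else 0)) \<and>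
     (\<forall>a c. comult one a c = (if a = c then 1 else 0) \<and> comult a one c = (if a = c then 1 else 0)) \<and>
     (\<forall>a b c e. (\<Sum>d\<in>Bn deg (deg a + deg b). mult a b d * mult d c e)
                = (\<Sum>d\<in>Bn deg (deg b + deg c). mult b c d * mult a d e)) \<and>
     (\<forall>x y z e. (\<Sum>d\<in>Bn deg (deg x + deg y). comult x y d * comult d z e)
                = (\<Sum>d\<in>Bn deg (deg y + deg z). comult y z d * comult x d e)) \<and>
     (\<forall>a b x y. (\<Sum>c\<in>Bn deg (deg a + deg b). mult a b c * comult x y c)
                = (\<Sum>a1\<in>Ble deg (deg a). \<Sum>a2\<in>Ble deg (deg a).
                   \<Sum>b1\<in>Ble deg (deg b). \<Sum>b2\<in>Ble deg (deg b).
                     comult a1 a2 a * comult b1 b2 b * mult a1 b1 x * mult a2 b2 y))"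

definition commutative_hopf :: "('b \<Rightarrow> 'b \<Rightarrow> 'b \<Rightarrow> nat) \<Rightarrow> bool" where
  "commutative_hopf mult \<longleftrightarrow> (\<forall>a b c. mult a b c = mult b a c)"

definition primitive :: "'b \<Rightarrow> ('b \<Rightarrow> 'b \<Rightarrow> 'b \<Rightarrow> nat) \<Rightarrow> 'b \<Rightarrow> bool" where
  "primitive one comult \<sigma> \<longleftrightarrow>
     (\<forall>a b. comult a b \<sigma> = (if a = \<sigma> \<and> b = one then 1 else 0) + (if a = one \<and> b = \<sigma> then 1 else 0))"

definition nondegenerate :: "'b \<Rightarrow> ('b \<Rightarrow> nat) \<Rightarrow> ('b \<Rightarrow> 'b \<Rightarrow> 'b \<Rightarrow> nat) \<Rightarrow> bool" where
  "nondegenerate one deg comult \<longleftrightarrow> (\<forall>\<sigma>. primitive one comult \<sigma> \<longleftrightarrow> deg \<sigma> = 1)"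

definition red_sum :: "('b \<Rightarrow> nat) \<Rightarrow> ('b \<Rightarrow> 'b \<Rightarrow> 'b \<Rightarrow> nat) \<Rightarrow> ('b \<Rightarrow> real) \<Rightarrow> ('b \<Rightarrow> real) \<Rightarrow> 'b \<Rightarrow> real" where
  "red_sum deg comult f g \<sigma> =
     (\<Sum>a\<in>{a. 0 < deg a \<and> deg a < deg \<sigma>}. \<Sum>b\<in>{b. 0 < deg b \<and> deg b < deg \<sigma>}.
        real (comult a b \<sigma>) * f a * g b)"

primrec qtab :: "(nat \<Rightarrow> real) \<Rightarrow> ('b \<Rightarrow> nat) \<Rightarrow> ('b \<Rightarrow> 'b \<Rightarrow> 'b \<Rightarrow> nat) \<Rightarrow> nat \<Rightarrow> 'b \<Rightarrow> real" where
  "qtab e deg comult 0 \<sigma> = (if deg \<sigma> = 0 then 1 else 0)"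
| "qtab e deg comult (Suc n) \<sigma> =
     (if deg \<sigma> \<le> n then qtab e deg comult n \<sigma>
      else if deg \<sigma> = Suc n then
        (if n = 0 then 1
         else (1 / (2 powr (e (Suc n)) - 2)) *
                red_sum deg comult (qtab e deg comult n) (qtab e deg comult n) \<sigma>)
      else 0)"

definition qchar :: "('b \<Rightarrow> nat) \<Rightarrow> ('b \<Rightarrow> 'b \<Rightarrow> 'b \<Rightarrow> nat) \<Rightarrow> 'b \<Rightarrow> real" where
  "qchar deg comult \<sigma> = qtab (\<lambda>m. real m) deg comult (deg \<sigma>) \<sigma>"

definition qgamma :: "real \<Rightarrow> nat \<Rightarrow> ('b \<Rightarrow> nat) \<Rightarrow> ('b \<Rightarrow> 'b \<Rightarrow> 'b \<Rightarrow> nat) \<Rightarrow> 'b \<Rightarrow> real" where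
  "qgamma \<gamma> N deg comult \<sigma> =
     qtab (\<lambda>m. if m \<le> N then real m else \<gamma> * real m) deg comult (deg \<sigma>) \<sigma>"

definition rough_path ::
  "real \<Rightarrow> 'b \<Rightarrow> ('b \<Rightarrow> nat) \<Rightarrow> ('b \<Rightarrow> 'b \<Rightarrow> 'b \<Rightarrow> nat) \<Rightarrow> ('b \<Rightarrow> 'b \<Rightarrow> 'b \<Rightarrow> nat)
     \<Rightarrow> (real \<Rightarrow> real \<Rightarrow> 'b \<Rightarrow> real) \<Rightarrow> bool" where
  "rough_path \<gamma> one deg mult comult X \<longleftrightarrow>
     (\<forall>s t. X s t one = 1) \<and>
     (\<forall>s t a b. (\<Sum>c\<in>Bn deg (deg a + deg b). real (mult a b c) * X s t c) = X s t a * X s t b) \<and>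
     (\<forall>s u t c. X s t c = (\<Sum>a\<in>Ble deg (deg c). \<Sum>b\<in>Ble deg (deg c).
                             real (comult a b c) * X s u a * X u t b)) \<and>
     (\<forall>\<sigma>. \<exists>K. \<forall>s t. s \<noteq> t \<longrightarrow> \<bar>X s t \<sigma>\<bar> \<le> K * \<bar>t - s\<bar> powr (\<gamma> * real (deg \<sigma>)))"

definition trunc_rough_path ::
  "real \<Rightarrow> nat \<Rightarrow> 'b \<Rightarrow> ('b \<Rightarrow> nat) \<Rightarrow> ('b \<Rightarrow> 'b \<Rightarrow> 'b \<Rightarrow> nat) \<Rightarrow> ('b \<Rightarrow> 'b \<Rightarrow> 'b \<Rightarrow> nat)
     \<Rightarrow> (real \<Rightarrow> real \<Rightarrow> 'b \<Rightarrow> real) \<Rightarrow> bool" where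
  "trunc_rough_path \<gamma> N one deg mult comult X \<longleftrightarrow>
     (\<forall>s t. X s t one = 1) \<and>
     (\<forall>s t a b. deg a + deg b \<le> N \<longrightarrow>
        (\<Sum>c\<in>Bn deg (deg a + deg b). real (mult a b c) * X s t c) = X s t a * X s t b) \<and>
     (\<forall>s u t c. deg c \<le> N \<longrightarrow> X s t c = (\<Sum>a\<in>Ble deg (deg c). \<Sum>b\<in>Ble deg (deg c).
                             real (comult a b c) * X s u a * X u t b)) \<and>
     (\<forall>\<sigma>. deg \<sigma> \<le> N \<longrightarrow>
        (\<exists>K. \<forall>s t. s \<noteq> t \<longrightarrow> \<bar>X s t \<sigma>\<bar> \<le> K * \<bar>t - s\<bar> powr (\<gamma> * real (deg \<sigma>))))"

definition extends_trunc :: "nat \<Rightarrow> ('b \<Rightarrow> nat) \<Rightarrow> (real \<Rightarrow> real \<Rightarrow> 'b \<Rightarrow> real) \<Rightarrow> (real \<Rightarrow> real \<Rightarrow> 'b \<Rightarrow> real) \<Rightarrow> bool" where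
  "extends_trunc N deg X Y \<longleftrightarrow> (\<forall>s t \<sigma>. deg \<sigma> \<le> N \<longrightarrow> X s t \<sigma> = Y s t \<sigma>)"

text \<open>|x|^a with the convention 0^0 = 1 (Isabelle has 0 powr 0 = 0).\<close>
definition hpow :: "real \<Rightarrow> real \<Rightarrow> real" where
  "hpow x a = (if a = 0 then 1 else x powr a)"

end

(*
  Above N every exponent gamma n exceeds 1.
  Given the extension up to degree n >= N and a basis element sigma of degree n+1,
  the germ A(s,t) built from lower levels through the base point 0 has defect
  A(s,t) - A(s,u) - A(u,t) = red_sum (X_su) (X_ut) (sigma), which is
  O(|t-s|^(gamma (n+1))); the sewing lemma gives an additive I close to A, and
  X(sigma) := A - I satisfies Chen's relation. Multiplicativity in the new degree holds
  because its defect is additive and of regularity gamma (n+1) > 1, hence zero; the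
  same argument applied to the difference of two extensions gives uniqueness.
  The bound comes from splitting [s,t] at its midpoint: by induction on the degree,
  the resulting constants obey exactly the recursion that defines q_gamma, and
  nondegeneracy makes q_gamma positive.
*)
theory Submission
  imports Defs
begin

section \<open>Regularity of two-parameter functions\<close>

lemma midpoint_split_bound:
  fixes Z F :: "real \<Rightarrow> real \<Rightarrow> real" and B K \<theta> :: real
  assumes \<theta>: "\<theta> > 1" and B: "B \<ge> 0"
    and split: "\<And>s t. Z s t = Z s ((s+t)/2) + Z ((s+t)/2) t + F s t"
    and F: "\<And>s t. \<bar>F s t\<bar> \<le> B * \<bar>t-s\<bar> powr \<theta>"
    and Z: "\<And>s t. \<bar>Z s t\<bar> \<le> K * \<bar>t-s\<bar> powr \<theta>"
  shows "\<bar>Z s t\<bar> \<le> B / (1 - 2 powr (1-\<theta>)) * \<bar>t-s\<bar> powr \<theta>"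
proof -
  define r where "r = (2::real) powr (1-\<theta>)"
  have r: "0 < r" "r < 1" unfolding r_def using \<theta> by (simp_all add: powr_less_one)
  have half: "2 * (\<bar>t-s\<bar>/2) powr \<theta> = r * \<bar>t-s\<bar> powr \<theta>" for s t :: real
    unfolding r_def by (simp add: powr_divide powr_diff)
  have iter: "\<bar>Z s t\<bar> \<le> (B * (1 - r^k)/(1-r) + K * r^k) * \<bar>t-s\<bar> powr \<theta>" for k s t
  proof (induction k arbitrary: s t)
    case 0
    then show ?case using Z by simp
  next
    case (Suc k)
    define m where "m = (s+t)/2"
    define c where "c = B * (1 - r^k)/(1-r) + K * r^k"
    have m: "\<bar>m - s\<bar> = \<bar>t-s\<bar>/2" "\<bar>t - m\<bar> = \<bar>t-s\<bar>/2" unfolding m_def by (simp_all add: field_simps)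
    have "\<bar>Z s t\<bar> \<le> \<bar>Z s m\<bar> + \<bar>Z m t\<bar> + \<bar>F s t\<bar>" using split[of s t] unfolding m_def by linarith
    also have "\<dots> \<le> c * (\<bar>t-s\<bar>/2) powr \<theta> + c * (\<bar>t-s\<bar>/2) powr \<theta> + B * \<bar>t-s\<bar> powr \<theta>"
      using Suc.IH[of s m] Suc.IH[of m t] F[of s t] m unfolding c_def by (intro add_mono) auto
    also have "\<dots> = (c * r + B) * \<bar>t-s\<bar> powr \<theta>" using half[of t s] by (simp add: algebra_simps)
    also have "c * r + B = B * (1 - r^Suc k)/(1-r) + K * r^Suc k"
      unfolding c_def using r by (simp add: field_simps)
    finally show ?case .
  qed
  have "(\<lambda>k. (B * (1 - r^k)/(1-r) + K * r^k) * \<bar>t-s\<bar> powr \<theta>) \<longlonglongrightarrow> (B * (1 - 0)/(1-r) + K * 0) * \<bar>t-s\<bar> powr \<theta>"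
    using r by (intro tendsto_intros LIMSEQ_power_zero) auto
  from tendsto_lowerbound[OF this] iter show ?thesis unfolding r_def by simp
qed

lemma additive_regular_eq_0:
  fixes Z :: "real \<Rightarrow> real \<Rightarrow> real" and K \<theta> :: real
  assumes \<theta>: "\<theta> > 1"
    and additive: "\<And>s u t. Z s t = Z s u + Z u t"
    and Z: "\<And>s t. s \<noteq> t \<Longrightarrow> \<bar>Z s t\<bar> \<le> K * \<bar>t-s\<bar> powr \<theta>"
  shows "Z s t = 0"
proof -
  have "Z s s = 0" for s using additive[of s s s] by simp
  then have "\<bar>Z s t\<bar> \<le> K * \<bar>t-s\<bar> powr \<theta>" for s t
    using Z[of s t] by (cases "s = t") auto
  then have "\<bar>Z s t\<bar> \<le> 0 / (1 - 2 powr (1-\<theta>)) * \<bar>t-s\<bar> powr \<theta>"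
    by (intro midpoint_split_bound[where F="\<lambda>_ _. 0"]) (use \<theta> additive in auto)
  then show ?thesis by simp
qed

text \<open>Since 0 powr \<theta> = 0, a regular function vanishes on the diagonal.\<close>
definition regular :: "real \<Rightarrow> (real \<Rightarrow> real \<Rightarrow> real) \<Rightarrow> bool" where
  "regular \<theta> f \<longleftrightarrow> (\<exists>K. \<forall>s t. \<bar>f s t\<bar> \<le> K * \<bar>t-s\<bar> powr \<theta>)"

lemma regular_nonneg_const:
  assumes "regular \<theta> f"
  shows "\<exists>K\<ge>0. \<forall>s t. \<bar>f s t\<bar> \<le> K * \<bar>t-s\<bar> powr \<theta>"
proof -
  obtain K where K: "\<And>s t. \<bar>f s t\<bar> \<le> K * \<bar>t-s\<bar> powr \<theta>"
    using assms unfolding regular_def by blast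
  have "\<bar>f s t\<bar> \<le> max K 0 * \<bar>t-s\<bar> powr \<theta>" for s t
    using K[of s t] by (meson max.cobounded1 mult_right_mono order_trans powr_ge_zero)
  then show ?thesis by (intro exI[of _ "max K 0"]) auto
qed

lemma regular_add: "regular \<theta> f \<Longrightarrow> regular \<theta> g \<Longrightarrow> regular \<theta> (\<lambda>s t. f s t + g s t)"
  unfolding regular_def
proof (elim exE)
  fix K1 K2
  assume K: "\<forall>s t. \<bar>f s t\<bar> \<le> K1 * \<bar>t-s\<bar> powr \<theta>" "\<forall>s t. \<bar>g s t\<bar> \<le> K2 * \<bar>t-s\<bar> powr \<theta>"
  have "\<bar>f s t + g s t\<bar> \<le> (K1 + K2) * \<bar>t-s\<bar> powr \<theta>" for s t
  proof -
    have "\<bar>f s t + g s t\<bar> \<le> \<bar>f s t\<bar> + \<bar>g s t\<bar>" by (rule abs_triangle_ineq)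
    also have "\<dots> \<le> K1 * \<bar>t-s\<bar> powr \<theta> + K2 * \<bar>t-s\<bar> powr \<theta>" using K by (intro add_mono) auto
    finally show ?thesis by (simp add: distrib_right)
  qed
  then show "\<exists>K. \<forall>s t. \<bar>f s t + g s t\<bar> \<le> K * \<bar>t-s\<bar> powr \<theta>" by blast
qed

lemma regular_minus: "regular \<theta> f \<Longrightarrow> regular \<theta> g \<Longrightarrow> regular \<theta> (\<lambda>s t. f s t - g s t)"
  using regular_add[of \<theta> f "\<lambda>s t. - g s t"] unfolding regular_def by simp

lemma regular_scaleR: "regular \<theta> f \<Longrightarrow> regular \<theta> (\<lambda>s t. r * f s t)"
proof -
  assume "regular \<theta> f"
  then obtain K where "K \<ge> 0" "\<And>s t. \<bar>f s t\<bar> \<le> K * \<bar>t-s\<bar> powr \<theta>"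
    using regular_nonneg_const by blast
  then have "\<bar>r * f s t\<bar> \<le> (\<bar>r\<bar> * K) * \<bar>t-s\<bar> powr \<theta>" for s t
    by (simp add: abs_mult mult.assoc mult_left_mono)
  then show ?thesis unfolding regular_def by blast
qed

lemma regular_sum:
  "finite S \<Longrightarrow> (\<And>c. c \<in> S \<Longrightarrow> regular \<theta> (f c)) \<Longrightarrow> regular \<theta> (\<lambda>s t. \<Sum>c\<in>S. f c s t)"
proof (induction S rule: finite_induct)
  case empty
  then show ?case unfolding regular_def by (intro exI[of _ 0]) simp
next
  case (insert x F)
  then show ?case by (simp add: regular_add)
qed

lemma regular_mult:
  assumes "regular \<theta>1 f" "regular \<theta>2 g"
  shows "regular (\<theta>1 + \<theta>2) (\<lambda>s t. f s t * g s t)"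
proof -
  obtain K1 where K1: "K1 \<ge> 0" "\<And>s t. \<bar>f s t\<bar> \<le> K1 * \<bar>t-s\<bar> powr \<theta>1"
    using regular_nonneg_const[OF assms(1)] by blast
  obtain K2 where K2: "K2 \<ge> 0" "\<And>s t. \<bar>g s t\<bar> \<le> K2 * \<bar>t-s\<bar> powr \<theta>2"
    using regular_nonneg_const[OF assms(2)] by blast
  have "\<bar>f s t * g s t\<bar> \<le> (K1 * \<bar>t-s\<bar> powr \<theta>1) * (K2 * \<bar>t-s\<bar> powr \<theta>2)" for s t
    unfolding abs_mult using K1 K2 by (intro mult_mono) auto
  then have "\<bar>f s t * g s t\<bar> \<le> (K1 * K2) * \<bar>t-s\<bar> powr (\<theta>1 + \<theta>2)" for s t
    by (simp add: powr_add algebra_simps)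
  then show ?thesis unfolding regular_def by blast
qed

lemma regular_if_off_diagonal:
  assumes "\<And>s t. s \<noteq> t \<Longrightarrow> \<bar>f s t\<bar> \<le> K * \<bar>t-s\<bar> powr \<theta>" and "\<And>s. f s s = 0"
  shows "regular \<theta> f"
proof -
  have "\<bar>f s t\<bar> \<le> K * \<bar>t-s\<bar> powr \<theta>" for s t
    using assms by (cases "s = t") auto
  then show ?thesis unfolding regular_def by blast
qed

section \<open>The sewing lemma\<close>

definition int_cumsum :: "(int \<Rightarrow> real) \<Rightarrow> int \<Rightarrow> real" where
  "int_cumsum a k = (\<Sum>i\<in>{0..<k}. a i) - (\<Sum>i\<in>{k..<0}. a i)"

lemma int_cumsum_plus1: "int_cumsum a (k + 1) = int_cumsum a k + a k"
proof (cases "0 \<le> k")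
  case True
  then have "{0..<k+1} = insert k {0..<k}" by auto
  then show ?thesis using True by (simp add: int_cumsum_def)
next
  case False
  then have "{k..<0} = insert k {k+1..<0}" by auto
  then show ?thesis using False by (simp add: int_cumsum_def)
qed

lemma int_increments_bound:
  fixes f :: "int \<Rightarrow> real"
  assumes "\<And>k. \<bar>f (k + 1) - f k\<bar> \<le> M"
  shows "\<bar>f l - f k\<bar> \<le> \<bar>of_int (l - k)\<bar> * M"
proof -
  have *: "\<bar>f (k + int n) - f k\<bar> \<le> real n * M" for k n
  proof (induction n)
    case (Suc n)
    have "k + int (Suc n) = (k + int n) + 1" by simp
    then have "\<bar>f (k + int (Suc n)) - f k\<bar> \<le> \<bar>f (k + int n + 1) - f (k + int n)\<bar> + \<bar>f (k + int n) - f k\<bar>"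
      by (simp only:)
    then show ?case using assms[of "k + int n"] Suc.IH by (simp add: algebra_simps)
  qed simp
  show ?thesis
  proof (cases "k \<le> l")
    case True
    then show ?thesis using *[of k "nat (l - k)"] by simp
  next
    case False
    then show ?thesis using *[of l "nat (k - l)"] by (simp add: abs_minus_commute)
  qed
qed

text \<open>
  Riemann sums of A are taken along the fixed grid c\<int> (cells counted from 0) rather than along
  partitions of [s,t]; increments of grid_sum are then additive in (s,t) by construction.
\<close>
definition grid_sum :: "(real \<Rightarrow> real \<Rightarrow> real) \<Rightarrow> real \<Rightarrow> real \<Rightarrow> real" where
  "grid_sum A c t =
     int_cumsum (\<lambda>i. A (of_int i * c) (of_int (i+1) * c)) \<lfloor>t/c\<rfloor> + A (of_int \<lfloor>t/c\<rfloor> * c) t"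

definition grid_incr :: "(real \<Rightarrow> real \<Rightarrow> real) \<Rightarrow> real \<Rightarrow> real \<Rightarrow> real \<Rightarrow> real" where
  "grid_incr A c s t = grid_sum A c t - grid_sum A c s"

lemma grid_incr_additive: "grid_incr A c s t = grid_incr A c s u + grid_incr A c u t"
  unfolding grid_incr_def by simp

lemma floor_divide_diff_bound:
  fixes c s t :: real
  assumes "c > 0"
  shows "\<bar>of_int (\<lfloor>t/c\<rfloor> - \<lfloor>s/c\<rfloor>)\<bar> \<le> \<bar>t-s\<bar>/c + 1"
proof -
  have "\<bar>of_int (\<lfloor>t/c\<rfloor> - \<lfloor>s/c\<rfloor>)\<bar> * c \<le> \<bar>t-s\<bar> + c"
    using floor_divide_lower[OF assms, of s] floor_divide_upper[OF assms, of s]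
      floor_divide_lower[OF assms, of t] floor_divide_upper[OF assms, of t] assms
    by (auto simp: abs_if algebra_simps)
  then show ?thesis using assms by (simp add: field_simps)
qed

lemma increments_summable_convergent:
  fixes f b :: "nat \<Rightarrow> real"
  assumes step: "\<And>m. \<bar>f (Suc m) - f m\<bar> \<le> b m" and b: "summable b"
  shows "convergent f" and "\<bar>lim f - f 0\<bar> \<le> suminf b"
proof -
  define d where "d m = f (Suc m) - f m" for m
  have abs: "summable (\<lambda>m. \<bar>d m\<bar>)"
    by (rule summable_comparison_test[OF _ b]) (use step in \<open>auto simp: d_def\<close>)
  then have "(\<lambda>m. \<Sum>j<m. d j) \<longlonglongrightarrow> suminf d"
    by (rule summable_LIMSEQ[OF summable_rabs_cancel])
  then have "(\<lambda>m. f 0 + (\<Sum>j<m. d j)) \<longlonglongrightarrow> f 0 + suminf d"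
    by (intro tendsto_add tendsto_const)
  then have lim: "f \<longlonglongrightarrow> f 0 + suminf d" unfolding d_def sum_lessThan_telescope by simp
  then show "convergent f" by (rule convergentI)
  have "\<bar>suminf d\<bar> \<le> suminf b"
    using summable_rabs[OF abs] suminf_le[of "\<lambda>m. \<bar>d m\<bar>" b] abs b step unfolding d_def
    by (meson order_trans)
  then show "\<bar>lim f - f 0\<bar> \<le> suminf b" using limI[OF lim] by simp
qed

context
  fixes A :: "real \<Rightarrow> real \<Rightarrow> real" and C \<theta> :: real
  assumes \<theta>: "\<theta> > 1" and C: "C \<ge> 0"
    and delta: "\<And>a b c. a \<le> b \<Longrightarrow> b \<le> c \<Longrightarrow> \<bar>A a c - A a b - A b c\<bar> \<le> C * (c-a) powr \<theta>"
begin

lemma sewing_defect_le: "a \<le> b \<Longrightarrow> b \<le> c \<Longrightarrow> c - a \<le> L \<Longrightarrow> \<bar>A a c - A a b - A b c\<bar> \<le> C * L powr \<theta>"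
  using delta[of a b c] \<theta> C by (smt (verit) mult_left_mono powr_mono2)

definition refine_defect :: "real \<Rightarrow> int \<Rightarrow> real" where
  "refine_defect c k = int_cumsum (\<lambda>i. A (of_int i * (c/2)) (of_int (i+1) * (c/2))) (2*k)
                      - int_cumsum (\<lambda>i. A (of_int i * c) (of_int (i+1) * c)) k"

lemma refine_defect_step:
  assumes c: "c > 0"
  shows "\<bar>refine_defect c (k+1) - refine_defect c k\<bar> \<le> C * c powr \<theta>"
proof -
  have "2*(k+1) = (2*k+1) + 1" by simp
  then have "refine_defect c (k+1) - refine_defect c k
      = - (A (of_int k * c) (of_int (k+1) * c) - A (of_int k * c) (of_int k * c + c/2)
           - A (of_int k * c + c/2) (of_int (k+1) * c))"
    unfolding refine_defect_def by (simp only: int_cumsum_plus1) (simp add: algebra_simps)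
  then show ?thesis using c by (simp only: abs_minus_cancel) (rule sewing_defect_le; simp add: algebra_simps)
qed

lemma grid_sum_refine:
  assumes c: "c > 0"
  shows "\<bar>grid_sum A (c/2) t - grid_sum A c t - refine_defect c \<lfloor>t/c\<rfloor>\<bar> \<le> C * c powr \<theta>"
proof -
  define k where "k = \<lfloor>t/c\<rfloor>"
  define k' where "k' = \<lfloor>t/(c/2)\<rfloor>"
  have c2: "c/2 > 0" using c by simp
  note f1 = floor_divide_lower[OF c, of t, folded k_def] floor_divide_upper[OF c, of t, folded k_def]
  note f2 = floor_divide_lower[OF c2, of t, folded k'_def] floor_divide_upper[OF c2, of t, folded k'_def]
  have "of_int (2*k) * (c/2) \<le> t" using f1 by simp
  then have "2*k \<le> k'" unfolding k'_def using c2 by (simp add: le_floor_iff pos_le_divide_eq)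
  moreover have "of_int k' * (c/2) < of_int (2*k+2) * (c/2)" using f1 f2 by (simp add: algebra_simps)
  then have "k' < 2*k + 2" using c by (simp add: mult_less_cancel_right)
  ultimately consider "k' = 2*k" | "k' = 2*k+1" by linarith
  then show ?thesis
  proof cases
    case 1
    then show ?thesis using c C unfolding grid_sum_def refine_defect_def k_def k'_def by simp
  next
    case 2
    then have "grid_sum A (c/2) t - grid_sum A c t - refine_defect c k
        = - (A (of_int k * c) t - A (of_int k * c) (of_int k * c + c/2) - A (of_int k * c + c/2) t)"
      unfolding grid_sum_def refine_defect_def k_def[symmetric] k'_def[symmetric]
      by (simp only: int_cumsum_plus1) (simp add: algebra_simps)
    moreover have "\<bar>A (of_int k * c) t - A (of_int k * c) (of_int k * c + c/2) - A (of_int k * c + c/2) t\<bar>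
        \<le> C * c powr \<theta>"
      by (rule sewing_defect_le) (use f1 f2 2 c in \<open>auto simp: algebra_simps\<close>)
    ultimately show ?thesis unfolding k_def by simp
  qed
qed

lemma grid_incr_refine:
  assumes c: "c > 0"
  shows "\<bar>grid_incr A (c/2) s t - grid_incr A c s t\<bar> \<le> (\<bar>t-s\<bar>/c + 3) * (C * c powr \<theta>)"
proof -
  have "\<bar>refine_defect c \<lfloor>t/c\<rfloor> - refine_defect c \<lfloor>s/c\<rfloor>\<bar>
      \<le> \<bar>of_int (\<lfloor>t/c\<rfloor> - \<lfloor>s/c\<rfloor>)\<bar> * (C * c powr \<theta>)"
    by (rule int_increments_bound) (rule refine_defect_step[OF c])
  also have "\<dots> \<le> (\<bar>t-s\<bar>/c + 1) * (C * c powr \<theta>)"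
    by (rule mult_right_mono[OF floor_divide_diff_bound[OF c]]) (use C in simp)
  finally show ?thesis using grid_sum_refine[OF c, of t] grid_sum_refine[OF c, of s]
    unfolding grid_incr_def by (simp add: algebra_simps abs_if split: if_splits; linarith)
qed

lemma grid_incr_coarse:
  assumes c: "c > 0" and st: "s \<le> t" "t - s \<le> c"
  shows "\<bar>grid_incr A c s t - A s t\<bar> \<le> 2 * (C * c powr \<theta>)"
proof -
  define k where "k = \<lfloor>s/c\<rfloor>"
  define k' where "k' = \<lfloor>t/c\<rfloor>"
  note f1 = floor_divide_lower[OF c, of s, folded k_def] floor_divide_upper[OF c, of s, folded k_def]
  note f2 = floor_divide_lower[OF c, of t, folded k'_def] floor_divide_upper[OF c, of t, folded k'_def]
  have "k \<le> k'" unfolding k_def k'_def using st c by (intro floor_mono divide_right_mono) auto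
  moreover have "of_int k' * c < of_int (k+2) * c" using f1 f2 st by (simp add: algebra_simps)
  then have "k' < k + 2" using c by (simp add: mult_less_cancel_right)
  ultimately consider "k' = k" | "k' = k+1" by linarith
  then show ?thesis
  proof cases
    case 1
    then have "grid_incr A c s t - A s t = A (of_int k * c) t - A (of_int k * c) s - A s t"
      unfolding grid_incr_def grid_sum_def k_def k'_def by simp
    moreover have "\<bar>A (of_int k * c) t - A (of_int k * c) s - A s t\<bar> \<le> C * c powr \<theta>"
      by (rule sewing_defect_le) (use f1 f2 1 st in \<open>auto simp: algebra_simps\<close>)
    ultimately show ?thesis using C c by simp
  next
    case 2
    then have "grid_incr A c s t - A s t
        = (A (of_int k * c) (of_int (k+1) * c) - A (of_int k * c) s - A s (of_int (k+1) * c))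
          - (A s t - A s (of_int (k+1) * c) - A (of_int (k+1) * c) t)"
      unfolding grid_incr_def grid_sum_def k_def[symmetric] k'_def[symmetric]
      by (simp add: int_cumsum_plus1)
    moreover have "\<bar>A (of_int k * c) (of_int (k+1) * c) - A (of_int k * c) s - A s (of_int (k+1) * c)\<bar>
        \<le> C * c powr \<theta>"
      by (rule sewing_defect_le) (use f1 f2 2 st in \<open>auto simp: algebra_simps\<close>)
    moreover have "\<bar>A s t - A s (of_int (k+1) * c) - A (of_int (k+1) * c) t\<bar> \<le> C * c powr \<theta>"
      by (rule sewing_defect_le) (use f1 f2 2 st in \<open>auto simp: algebra_simps\<close>)
    ultimately show ?thesis by linarith
  qed
qed

lemma grid_incr_dyadic:
  assumes h: "h > 0"
  shows "convergent (\<lambda>m. grid_incr A (h/2^m) s t)"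
    and "\<bar>lim (\<lambda>m. grid_incr A (h/2^m) s t) - grid_incr A h s t\<bar>
           \<le> C * h powr \<theta> * (\<bar>t-s\<bar>/h) / (1 - 2 / 2 powr \<theta>) + 3 * C * h powr \<theta> / (1 - 1 / 2 powr \<theta>)"
proof -
  define r where "r = 2 / (2::real) powr \<theta>"
  define q where "q = 1 / (2::real) powr \<theta>"
  have "2 powr \<theta> > (2::real)" using powr_less_mono[OF \<theta>, of 2] by simp
  then have r: "0 < r" "r < 1" and q: "0 < q" "q < 1" unfolding r_def q_def by auto
  define f where "f = (\<lambda>m. grid_incr A (h/2^m) s t)"
  define b where "b = (\<lambda>m. C * h powr \<theta> * (\<bar>t-s\<bar>/h) * r^m + 3 * C * h powr \<theta> * q^m)"
  have step: "\<bar>f (Suc m) - f m\<bar> \<le> b m" for m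
  proof -
    have "(h/2^m) powr \<theta> = h powr \<theta> * q^m"
      by (simp add: q_def powr_divide powr_realpow[symmetric] powr_powr powr_power[symmetric]
          power_one_over mult.commute)
    moreover have "(2::real)^m * q^m = r^m" unfolding r_def q_def by (simp add: power_mult_distrib[symmetric])
    ultimately have "(\<bar>t-s\<bar>/(h/2^m) + 3) * (C * (h/2^m) powr \<theta>) = b m"
      unfolding b_def by (simp add: algebra_simps)
    moreover have "h / 2 ^ Suc m = (h/2^m)/2" by simp
    ultimately show ?thesis
      unfolding f_def using grid_incr_refine[of "h/2^m" s t] h by (simp add: mult.commute)
  qed
  have "b sums (C * h powr \<theta> * (\<bar>t-s\<bar>/h) * (1 / (1 - r)) + 3 * C * h powr \<theta> * (1 / (1 - q)))"
    unfolding b_def using r q by (intro sums_add sums_mult geometric_sums) auto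
  then have b: "summable b"
    and "suminf b = C * h powr \<theta> * (\<bar>t-s\<bar>/h) / (1 - r) + 3 * C * h powr \<theta> / (1 - q)"
    by (auto simp: sums_iff)
  then show "convergent (\<lambda>m. grid_incr A (h/2^m) s t)"
    and "\<bar>lim (\<lambda>m. grid_incr A (h/2^m) s t) - grid_incr A h s t\<bar>
           \<le> C * h powr \<theta> * (\<bar>t-s\<bar>/h) / (1 - 2 / 2 powr \<theta>) + 3 * C * h powr \<theta> / (1 - 1 / 2 powr \<theta>)"
    using increments_summable_convergent[OF step b] unfolding f_def r_def q_def by simp_all
qed

definition dyadic_sewing :: "real \<Rightarrow> real \<Rightarrow> real \<Rightarrow> real" where
  "dyadic_sewing h s t = lim (\<lambda>m. grid_incr A (h/2^m) s t)"

lemma dyadic_sewing_LIMSEQ: "h > 0 \<Longrightarrow> (\<lambda>m. grid_incr A (h/2^m) s t) \<longlonglongrightarrow> dyadic_sewing h s t"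
  unfolding dyadic_sewing_def using grid_incr_dyadic(1) convergent_LIMSEQ_iff by blast

lemma dyadic_sewing_additive:
  assumes h: "h > 0"
  shows "dyadic_sewing h s t = dyadic_sewing h s u + dyadic_sewing h u t"
proof -
  have "(\<lambda>m. grid_incr A (h/2^m) s u + grid_incr A (h/2^m) u t)
      \<longlonglongrightarrow> dyadic_sewing h s u + dyadic_sewing h u t"
    by (intro tendsto_add dyadic_sewing_LIMSEQ h)
  then show ?thesis
    unfolding grid_incr_additive[symmetric] using dyadic_sewing_LIMSEQ[OF h] LIMSEQ_unique by blast
qed

lemma dyadic_sewing_double:
  assumes h: "h > 0"
  shows "dyadic_sewing (2*h) s t = dyadic_sewing h s t"
proof -
  have "(\<lambda>m. grid_incr A (2*h/2^Suc m) s t) \<longlonglongrightarrow> dyadic_sewing h s t"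
    using dyadic_sewing_LIMSEQ[OF h] by simp
  then have "(\<lambda>m. grid_incr A (2*h/2^m) s t) \<longlonglongrightarrow> dyadic_sewing h s t"
    by (rule LIMSEQ_imp_Suc)
  moreover have "(\<lambda>m. grid_incr A (2*h/2^m) s t) \<longlonglongrightarrow> dyadic_sewing (2*h) s t"
    using h by (intro dyadic_sewing_LIMSEQ) simp
  ultimately show ?thesis using LIMSEQ_unique by blast
qed

lemma dyadic_sewing_power2:
  assumes "h > 0"
  shows "dyadic_sewing (2^n * h) s t = dyadic_sewing h s t"
  by (induction n) (use assms dyadic_sewing_double in \<open>auto simp: mult.assoc\<close>)

lemma dyadic_sewing_rescale:
  assumes L: "L > 0"
  obtains h where "L \<le> h" "h \<le> 2*L" "\<And>s t. dyadic_sewing h s t = dyadic_sewing 1 s t"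
proof
  define j where "j = \<lceil>log 2 L\<rceil>"
  define h where "h = (2::real) powr (of_int j)"
  have "L = 2 powr (log 2 L)" using L by simp
  also have "\<dots> \<le> h" unfolding h_def j_def by (intro powr_mono) auto
  finally show "L \<le> h" .
  have "h \<le> 2 powr (log 2 L + 1)" unfolding h_def j_def by (intro powr_mono) linarith+
  also have "\<dots> = 2 * L" using L by (simp add: powr_add)
  finally show "h \<le> 2*L" .
  fix s t
  show "dyadic_sewing h s t = dyadic_sewing 1 s t"
  proof (cases "0 \<le> j")
    case True
    then have "h = 2^(nat j) * 1" unfolding h_def by (simp add: powr_realpow[symmetric])
    then show ?thesis using dyadic_sewing_power2[of 1 "nat j"] by simp
  next
    case False
    then have "1 = 2^(nat (-j)) * h" unfolding h_def by (simp add: powr_realpow[symmetric] powr_add[symmetric])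
    then show ?thesis using dyadic_sewing_power2[of h "nat (-j)"] unfolding h_def by simp
  qed
qed

lemma dyadic_sewing_approx:
  "\<exists>K. \<forall>s t. s < t \<longrightarrow> \<bar>A s t - dyadic_sewing 1 s t\<bar> \<le> K * (t-s) powr \<theta>"
proof -
  define r where "r = 2 / (2::real) powr \<theta>"
  define q where "q = 1 / (2::real) powr \<theta>"
  have "2 powr \<theta> > (2::real)" using powr_less_mono[OF \<theta>, of 2] by simp
  then have rq: "0 < 1 - r" "0 < 1 - q" unfolding r_def q_def by auto
  define K where "K = C * 2 powr \<theta> * (1 / (1 - r) + 3 / (1 - q) + 2)"
  have "\<bar>A s t - dyadic_sewing 1 s t\<bar> \<le> K * (t-s) powr \<theta>" if st: "s < t" for s t
  proof -
    \<comment> \<open>Compare with a grid whose mesh h is comparable to t - s.\<close>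
    obtain h where h: "t - s \<le> h" "h \<le> 2*(t-s)" "\<And>s t. dyadic_sewing h s t = dyadic_sewing 1 s t"
      using dyadic_sewing_rescale[of "t-s"] st by auto
    have h0: "h > 0" using h st by simp
    have "\<bar>dyadic_sewing h s t - grid_incr A h s t\<bar>
        \<le> C * h powr \<theta> * (\<bar>t-s\<bar>/h) / (1 - r) + 3 * C * h powr \<theta> / (1 - q)"
      using grid_incr_dyadic(2)[OF h0, of s t] unfolding dyadic_sewing_def r_def q_def .
    also have "\<dots> \<le> C * h powr \<theta> * 1 / (1 - r) + 3 * C * h powr \<theta> / (1 - q)"
      using h st h0 rq C by (intro add_mono divide_right_mono mult_left_mono) auto
    finally have "\<bar>A s t - dyadic_sewing 1 s t\<bar> \<le> C * h powr \<theta> * (1 / (1 - r) + 3 / (1 - q) + 2)"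
      using grid_incr_coarse[OF h0, of s t] st h unfolding h(3)[symmetric] by (simp add: field_simps)
    also have "\<dots> \<le> C * (2 * (t-s)) powr \<theta> * (1 / (1 - r) + 3 / (1 - q) + 2)"
      using h h0 \<theta> rq C by (intro mult_right_mono mult_left_mono powr_mono2) auto
    also have "(2 * (t-s)) powr \<theta> = 2 powr \<theta> * (t-s) powr \<theta>" by (simp only: powr_mult)
    finally show ?thesis unfolding K_def by (simp add: algebra_simps)
  qed
  then show ?thesis by blast
qed

end

section \<open>Convolution on a combinatorial Hopf algebra\<close>

lemma sum_swap_1_2:
  "(\<Sum>x\<in>X. \<Sum>a\<in>A. \<Sum>b\<in>B. f x a b) = (\<Sum>a\<in>A. \<Sum>b\<in>B. \<Sum>x\<in>X. f x a b)"
proof -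
  have "(\<Sum>x\<in>X. \<Sum>a\<in>A. \<Sum>b\<in>B. f x a b) = (\<Sum>a\<in>A. \<Sum>x\<in>X. \<Sum>b\<in>B. f x a b)"
    by (rule sum.swap)
  also have "\<dots> = (\<Sum>a\<in>A. \<Sum>b\<in>B. \<Sum>x\<in>X. f x a b)"
    by (rule sum.cong[OF refl], rule sum.swap)
  finally show ?thesis .
qed

lemma sum_swap_2_2:
  "(\<Sum>x\<in>X. \<Sum>y\<in>Y. \<Sum>a\<in>A. \<Sum>b\<in>B. f x y a b) = (\<Sum>a\<in>A. \<Sum>b\<in>B. \<Sum>x\<in>X. \<Sum>y\<in>Y. f x y a b)"
proof -
  have "(\<Sum>x\<in>X. \<Sum>y\<in>Y. \<Sum>a\<in>A. \<Sum>b\<in>B. f x y a b) = (\<Sum>x\<in>X. \<Sum>a\<in>A. \<Sum>b\<in>B. \<Sum>y\<in>Y. f x y a b)"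
    by (rule sum.cong[OF refl], rule sum_swap_1_2)
  also have "\<dots> = (\<Sum>a\<in>A. \<Sum>b\<in>B. \<Sum>x\<in>X. \<Sum>y\<in>Y. f x y a b)"
    by (rule sum_swap_1_2)
  finally show ?thesis .
qed

lemma sum_swap_1_4:
  "(\<Sum>x\<in>X. \<Sum>a\<in>A. \<Sum>b\<in>B. \<Sum>c\<in>C. \<Sum>d\<in>D. f x a b c d)
     = (\<Sum>a\<in>A. \<Sum>b\<in>B. \<Sum>c\<in>C. \<Sum>d\<in>D. \<Sum>x\<in>X. f x a b c d)"
proof -
  have "(\<Sum>x\<in>X. \<Sum>a\<in>A. \<Sum>b\<in>B. \<Sum>c\<in>C. \<Sum>d\<in>D. f x a b c d)
      = (\<Sum>a\<in>A. \<Sum>b\<in>B. \<Sum>x\<in>X. \<Sum>c\<in>C. \<Sum>d\<in>D. f x a b c d)"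
    by (rule sum_swap_1_2)
  also have "\<dots> = (\<Sum>a\<in>A. \<Sum>b\<in>B. \<Sum>c\<in>C. \<Sum>d\<in>D. \<Sum>x\<in>X. f x a b c d)"
    by (rule sum.cong[OF refl], rule sum.cong[OF refl], rule sum_swap_1_2)
  finally show ?thesis .
qed

lemma sum_sum_delta:
  assumes "finite A" "finite B" "p \<in> A" "q \<in> B"
  shows "(\<Sum>a\<in>A. \<Sum>b\<in>B. if a = p \<and> b = q then v else 0) = v"
proof -
  have "(\<Sum>a\<in>A. \<Sum>b\<in>B. if a = p \<and> b = q then v else 0) = (\<Sum>a\<in>A. if a = p then v else 0)"
    using assms by (intro sum.cong refl) simp
  then show ?thesis using assms by simp
qed

lemma sum4_delta:
  assumes "finite A" "finite B" "p1 \<in> A" "p2 \<in> A" "q1 \<in> B" "q2 \<in> B"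
  shows "(\<Sum>a1\<in>A. \<Sum>a2\<in>A. \<Sum>b1\<in>B. \<Sum>b2\<in>B.
           if a1 = p1 \<and> a2 = p2 \<and> b1 = q1 \<and> b2 = q2 then v else 0) = v"
proof -
  have "(\<Sum>a1\<in>A. \<Sum>a2\<in>A. \<Sum>b1\<in>B. \<Sum>b2\<in>B.
           if a1 = p1 \<and> a2 = p2 \<and> b1 = q1 \<and> b2 = q2 then v else 0)
      = (\<Sum>a1\<in>A. \<Sum>a2\<in>A. if a1 = p1 \<and> a2 = p2 then v else 0)"
    using assms sum_sum_delta[of B B q1 q2 v] by (intro sum.cong refl) auto
  then show ?thesis using sum_sum_delta assms by simp
qed

locale comb_hopf_alg =
  fixes one :: 'a and deg :: "'a \<Rightarrow> nat" and mult comult :: "'a \<Rightarrow> 'a \<Rightarrow> 'a \<Rightarrow> nat"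
  assumes comb_hopf: "comb_hopf one deg mult comult"
begin

lemma finite_Bn: "finite (Bn deg n)"
  using comb_hopf unfolding comb_hopf_def by (elim conjE) blast

lemma Bn_0: "Bn deg 0 = {one}"
  using comb_hopf unfolding comb_hopf_def by (elim conjE) blast

lemma mem_Bn [simp]: "a \<in> Bn deg n \<longleftrightarrow> deg a = n"
  unfolding Bn_def by simp

lemma mem_Ble [simp]: "a \<in> Ble deg n \<longleftrightarrow> deg a \<le> n"
  unfolding Ble_def by simp

lemma deg_eq_0_iff: "deg a = 0 \<longleftrightarrow> a = one"
proof -
  have "a \<in> Bn deg 0 \<longleftrightarrow> a \<in> {one}" by (simp only: Bn_0)
  then show ?thesis by simp
qed

lemma deg_one [simp]: "deg one = 0"
  by (simp add: deg_eq_0_iff)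

lemma mult_deg: "mult a b c \<noteq> 0 \<Longrightarrow> deg c = deg a + deg b"
  using comb_hopf unfolding comb_hopf_def by (elim conjE) metis

lemma comult_deg: "comult a b c \<noteq> 0 \<Longrightarrow> deg a + deg b = deg c"
  using comb_hopf unfolding comb_hopf_def by (elim conjE) metis

lemma mult_one_left: "mult one a c = (if c = a then 1 else 0)"
  and mult_one_right: "mult a one c = (if c = a then 1 else 0)"
  using comb_hopf unfolding comb_hopf_def by (elim conjE; metis)+

lemma comult_one_left: "comult one a c = (if a = c then 1 else 0)"
  and comult_one_right: "comult a one c = (if a = c then 1 else 0)"
  using comb_hopf unfolding comb_hopf_def by (elim conjE; metis)+

lemma comult_coassoc:
  "(\<Sum>d\<in>Bn deg (deg x + deg y). comult x y d * comult d z e)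
     = (\<Sum>d\<in>Bn deg (deg y + deg z). comult y z d * comult x d e)"
  using comb_hopf unfolding comb_hopf_def by (elim conjE) metis

lemma mult_comult_compat:
  "(\<Sum>c\<in>Bn deg (deg a + deg b). mult a b c * comult x y c)
     = (\<Sum>a1\<in>Ble deg (deg a). \<Sum>a2\<in>Ble deg (deg a). \<Sum>b1\<in>Ble deg (deg b). \<Sum>b2\<in>Ble deg (deg b).
          comult a1 a2 a * comult b1 b2 b * mult a1 b1 x * mult a2 b2 y)"
  using comb_hopf unfolding comb_hopf_def by (elim conjE) metis

lemma finite_Ble: "finite (Ble deg n)"
proof -
  have "Ble deg n = (\<Union>k\<le>n. Bn deg k)" by auto
  then show ?thesis using finite_Bn by simp
qed

lemma finite_mid_degrees: "finite {a. 0 < deg a \<and> deg a < d}"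
  by (rule finite_subset[OF _ finite_Ble[of d]]) auto

definition conv :: "('a \<Rightarrow> real) \<Rightarrow> ('a \<Rightarrow> real) \<Rightarrow> 'a \<Rightarrow> real" where
  "conv f g \<sigma> = (\<Sum>a\<in>Ble deg (deg \<sigma>). \<Sum>b\<in>Ble deg (deg \<sigma>). real (comult a b \<sigma>) * f a * g b)"

definition mult_val :: "('a \<Rightarrow> real) \<Rightarrow> 'a \<Rightarrow> 'a \<Rightarrow> real" where
  "mult_val p a b = (\<Sum>c\<in>Bn deg (deg a + deg b). real (mult a b c) * p c)"

definition counit :: "'a \<Rightarrow> real" where
  "counit \<sigma> = (if \<sigma> = one then 1 else 0)"

lemma conv_cong:
  assumes "\<And>a. deg a \<le> deg \<sigma> \<Longrightarrow> f a = f' a" "\<And>a. deg a \<le> deg \<sigma> \<Longrightarrow> g a = g' a"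
  shows "conv f g \<sigma> = conv f' g' \<sigma>"
  unfolding conv_def using assms by (intro sum.cong refl) auto

lemma red_sum_cong:
  assumes "\<And>a. 0 < deg a \<Longrightarrow> deg a < deg \<sigma> \<Longrightarrow> f a = f' a"
    and "\<And>a. 0 < deg a \<Longrightarrow> deg a < deg \<sigma> \<Longrightarrow> g a = g' a"
  shows "red_sum deg comult f g \<sigma> = red_sum deg comult f' g' \<sigma>"
  unfolding red_sum_def using assms by (intro sum.cong refl) auto

lemma mult_val_cong:
  assumes "\<And>c. deg c = deg a + deg b \<Longrightarrow> p c = p' c"
  shows "mult_val p a b = mult_val p' a b"
  unfolding mult_val_def using assms by (intro sum.cong refl) auto

lemma conv_eq_sum_Ble:
  assumes "deg \<sigma> \<le> M"
  shows "conv f g \<sigma> = (\<Sum>a\<in>Ble deg M. \<Sum>b\<in>Ble deg M. real (comult a b \<sigma>) * f a * g b)"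
  unfolding conv_def using assms comult_deg
  by (intro sum.mono_neutral_cong finite_Ble) (fastforce intro!: sum.neutral)+

lemma comult_coassoc_Ble:
  assumes "deg e \<le> n"
  shows "(\<Sum>d\<in>Ble deg n. real (comult x y d) * real (comult d z e))
       = (\<Sum>d\<in>Ble deg n. real (comult y z d) * real (comult x d e))"
proof -
  have "(\<Sum>d\<in>Ble deg n. real (comult x y d) * real (comult d z e))
      = real (\<Sum>d\<in>Bn deg (deg x + deg y). comult x y d * comult d z e)"
    unfolding of_nat_sum of_nat_mult using assms comult_deg
    by (intro sum.mono_neutral_cong finite_Ble finite_Bn) fastforce+
  also have "\<dots> = real (\<Sum>d\<in>Bn deg (deg y + deg z). comult y z d * comult x d e)"
    by (simp only: comult_coassoc)
  also have "\<dots> = (\<Sum>d\<in>Ble deg n. real (comult y z d) * real (comult x d e))"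
    unfolding of_nat_sum of_nat_mult using assms comult_deg
    by (intro sum.mono_neutral_cong finite_Ble finite_Bn) fastforce+
  finally show ?thesis .
qed

lemma conv_assoc: "conv (conv f g) h \<sigma> = conv f (conv g h) \<sigma>"
proof -
  define B where "B = Ble deg (deg \<sigma>)"
  have conv_B: "d \<in> B \<Longrightarrow> conv f g d = (\<Sum>a\<in>B. \<Sum>b\<in>B. real (comult a b d) * f a * g b)" for d f g
    unfolding B_def by (rule conv_eq_sum_Ble) simp
  have "conv (conv f g) h \<sigma>
      = (\<Sum>d\<in>B. \<Sum>c\<in>B. \<Sum>a\<in>B. \<Sum>b\<in>B. (real (comult a b d) * real (comult d c \<sigma>)) * (f a * g b * h c))"
    unfolding conv_def[of "conv f g" h \<sigma>] B_def[symmetric]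
    by (intro sum.cong refl) (simp add: conv_B sum_distrib_left sum_distrib_right algebra_simps)
  also have "\<dots> = (\<Sum>a\<in>B. \<Sum>b\<in>B. \<Sum>d\<in>B. \<Sum>c\<in>B. (real (comult a b d) * real (comult d c \<sigma>)) * (f a * g b * h c))"
    by (rule sum_swap_2_2)
  also have "\<dots> = (\<Sum>a\<in>B. \<Sum>b\<in>B. \<Sum>c\<in>B. (\<Sum>d\<in>B. real (comult a b d) * real (comult d c \<sigma>)) * (f a * g b * h c))"
    by (simp only: sum_distrib_right) (intro sum.cong refl sum.swap)
  also have "\<dots> = (\<Sum>a\<in>B. \<Sum>b\<in>B. \<Sum>c\<in>B. (\<Sum>d\<in>B. real (comult b c d) * real (comult a d \<sigma>)) * (f a * g b * h c))"
    unfolding B_def by (simp only: comult_coassoc_Ble[OF order_refl])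
  also have "\<dots> = (\<Sum>a\<in>B. \<Sum>d\<in>B. \<Sum>b\<in>B. \<Sum>c\<in>B. (real (comult b c d) * real (comult a d \<sigma>)) * (f a * g b * h c))"
    by (simp only: sum_distrib_right) (rule sum.cong[OF refl], rule sum_swap_1_2[symmetric])
  also have "\<dots> = conv f (conv g h) \<sigma>"
    unfolding conv_def[of f "conv g h" \<sigma>] B_def[symmetric]
    by (intro sum.cong refl) (simp add: conv_B sum_distrib_left algebra_simps)
  finally show ?thesis .
qed

lemma conv_one: "conv f g one = f one * g one"
proof -
  have "Ble deg 0 = {one}" unfolding Bn_0[symmetric] Ble_def Bn_def by simp
  then show ?thesis unfolding conv_def by (simp add: comult_one_left)
qed

lemma conv_split:
  assumes \<sigma>: "0 < deg \<sigma>"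
  shows "conv f g \<sigma> = f \<sigma> * g one + f one * g \<sigma> + red_sum deg comult f g \<sigma>"
proof -
  define B where "B = Ble deg (deg \<sigma>)"
  define Mid where "Mid = {a. 0 < deg a \<and> deg a < deg \<sigma>}"
  define T where "T a b = real (comult a b \<sigma>) * f a * g b" for a b
  have "\<sigma> \<noteq> one" using \<sigma> by auto
  have T: "T a b = (if a = \<sigma> \<and> b = one then f \<sigma> * g one else 0)
      + (if a = one \<and> b = \<sigma> then f one * g \<sigma> else 0)
      + (if a \<in> Mid \<and> b \<in> Mid then T a b else 0)" for a b
  proof (cases "a = one \<or> b = one")
    case True
    then show ?thesis
      using \<open>\<sigma> \<noteq> one\<close> unfolding T_def Mid_def by (auto simp: comult_one_left comult_one_right)
  next
    case False
    then have "comult a b \<sigma> \<noteq> 0 \<Longrightarrow> a \<in> Mid \<and> b \<in> Mid"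
      unfolding Mid_def using comult_deg[of a b \<sigma>] deg_eq_0_iff by fastforce
    then show ?thesis using False unfolding T_def by auto
  qed
  have B: "finite B" "\<sigma> \<in> B" "one \<in> B" "Mid \<subseteq> B" unfolding B_def Mid_def by (auto simp: finite_Ble)
  then have "(\<Sum>a\<in>B. \<Sum>b\<in>B. if a \<in> Mid \<and> b \<in> Mid then T a b else 0) = (\<Sum>a\<in>B \<inter> Mid. \<Sum>b\<in>B \<inter> Mid. T a b)"
    by (auto simp: sum.inter_restrict intro!: sum.cong)
  with B have "(\<Sum>a\<in>B. \<Sum>b\<in>B. T a b) = f \<sigma> * g one + f one * g \<sigma> + (\<Sum>a\<in>Mid. \<Sum>b\<in>Mid. T a b)"
    by (subst T) (simp only: sum.distrib sum_sum_delta Int_absorb1)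
  then show ?thesis unfolding conv_def red_sum_def B_def Mid_def T_def .
qed

lemma conv_counit_left: "conv counit g \<sigma> = g \<sigma>"
proof (cases "deg \<sigma> = 0")
  case True
  then show ?thesis by (simp add: deg_eq_0_iff conv_one counit_def)
next
  case False
  then have "\<sigma> \<noteq> one" by auto
  moreover have "red_sum deg comult counit g \<sigma> = 0"
    unfolding red_sum_def counit_def by (intro sum.neutral) auto
  ultimately show ?thesis using False by (simp add: conv_split counit_def)
qed

lemma mult_val_one_left: "mult_val p one b = p b"
proof -
  have "mult_val p one b = (\<Sum>c\<in>Bn deg (deg b). if c = b then p c else 0)"
    unfolding mult_val_def by (intro sum.cong) (simp_all add: mult_one_left)
  then show ?thesis by (simp add: finite_Bn)
qed

lemma mult_val_one_right: "mult_val p a one = p a"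
proof -
  have "mult_val p a one = (\<Sum>c\<in>Bn deg (deg a). if c = a then p c else 0)"
    unfolding mult_val_def by (intro sum.cong) (simp_all add: mult_one_right)
  then show ?thesis by (simp add: finite_Bn)
qed

lemma mult_val_conv:
  "mult_val (conv p q) a b
     = (\<Sum>a1\<in>Ble deg (deg a). \<Sum>a2\<in>Ble deg (deg a). \<Sum>b1\<in>Ble deg (deg b). \<Sum>b2\<in>Ble deg (deg b).
          real (comult a1 a2 a) * real (comult b1 b2 b) * (mult_val p a1 b1 * mult_val q a2 b2))"
proof -
  define n where "n = deg a + deg b"
  define B where "B = Ble deg n"
  define A1 where "A1 = Ble deg (deg a)"
  define B1 where "B1 = Ble deg (deg b)"
  have compat: "(\<Sum>c\<in>Bn deg n. real (mult a b c) * real (comult x y c))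
     = (\<Sum>a1\<in>A1. \<Sum>a2\<in>A1. \<Sum>b1\<in>B1. \<Sum>b2\<in>B1.
          real (comult a1 a2 a) * real (comult b1 b2 b) * real (mult a1 b1 x) * real (mult a2 b2 y))" for x y
    using arg_cong[OF mult_comult_compat[of a b x y], of real] unfolding n_def A1_def B1_def by simp
  have mult_val_B: "a1 \<in> A1 \<Longrightarrow> b1 \<in> B1 \<Longrightarrow> (\<Sum>x\<in>B. real (mult a1 b1 x) * r x) = mult_val r a1 b1" for a1 b1 r
    unfolding mult_val_def B_def A1_def B1_def n_def using mult_deg
    by (intro sum.mono_neutral_cong finite_Ble finite_Bn) fastforce+
  have "mult_val (conv p q) a b
      = (\<Sum>c\<in>Bn deg n. \<Sum>x\<in>B. \<Sum>y\<in>B. (real (mult a b c) * real (comult x y c)) * (p x * q y))"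
    unfolding mult_val_def n_def[symmetric] B_def
    by (intro sum.cong refl) (simp add: conv_eq_sum_Ble[of _ n] sum_distrib_left algebra_simps)
  also have "\<dots> = (\<Sum>x\<in>B. \<Sum>y\<in>B. \<Sum>c\<in>Bn deg n. (real (mult a b c) * real (comult x y c)) * (p x * q y))"
    by (rule sum_swap_1_2)
  also have "\<dots> = (\<Sum>x\<in>B. \<Sum>y\<in>B. (\<Sum>c\<in>Bn deg n. real (mult a b c) * real (comult x y c)) * (p x * q y))"
    by (simp only: sum_distrib_right)
  also have "\<dots> = (\<Sum>x\<in>B. \<Sum>y\<in>B. \<Sum>a1\<in>A1. \<Sum>a2\<in>A1. \<Sum>b1\<in>B1. \<Sum>b2\<in>B1.
          (real (comult a1 a2 a) * real (comult b1 b2 b)) * ((real (mult a1 b1 x) * p x) * (real (mult a2 b2 y) * q y)))"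
    unfolding compat sum_distrib_right by (intro sum.cong refl) (simp add: algebra_simps)
  also have "\<dots> = (\<Sum>x\<in>B. \<Sum>a1\<in>A1. \<Sum>a2\<in>A1. \<Sum>b1\<in>B1. \<Sum>b2\<in>B1. \<Sum>y\<in>B.
          (real (comult a1 a2 a) * real (comult b1 b2 b)) * ((real (mult a1 b1 x) * p x) * (real (mult a2 b2 y) * q y)))"
    by (rule sum.cong[OF refl], rule sum_swap_1_4)
  also have "\<dots> = (\<Sum>a1\<in>A1. \<Sum>a2\<in>A1. \<Sum>b1\<in>B1. \<Sum>b2\<in>B1. \<Sum>x\<in>B. \<Sum>y\<in>B.
          (real (comult a1 a2 a) * real (comult b1 b2 b)) * ((real (mult a1 b1 x) * p x) * (real (mult a2 b2 y) * q y)))"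
    by (rule sum_swap_1_4)
  also have "\<dots> = (\<Sum>a1\<in>A1. \<Sum>a2\<in>A1. \<Sum>b1\<in>B1. \<Sum>b2\<in>B1.
          (real (comult a1 a2 a) * real (comult b1 b2 b))
            * ((\<Sum>x\<in>B. real (mult a1 b1 x) * p x) * (\<Sum>y\<in>B. real (mult a2 b2 y) * q y)))"
    by (simp only: sum_product, simp only: sum_distrib_left)
  also have "\<dots> = (\<Sum>a1\<in>A1. \<Sum>a2\<in>A1. \<Sum>b1\<in>B1. \<Sum>b2\<in>B1.
          real (comult a1 a2 a) * real (comult b1 b2 b) * (mult_val p a1 b1 * mult_val q a2 b2))"
    by (intro sum.cong refl) (simp add: mult_val_B)
  finally show ?thesis unfolding A1_def B1_def .
qed

lemma mult_defect_conv:
  assumes p_one: "p one = 1" and q_one: "q one = 1"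
    and p_mult: "\<And>x y. deg x + deg y < deg a + deg b \<Longrightarrow> mult_val p x y = p x * p y"
    and q_mult: "\<And>x y. deg x + deg y < deg a + deg b \<Longrightarrow> mult_val q x y = q x * q y"
    and a: "0 < deg a" and b: "0 < deg b"
  shows "mult_val (conv p q) a b - conv p q a * conv p q b
           = (mult_val p a b - p a * p b) + (mult_val q a b - q a * q b)"
proof -
  define A1 where "A1 = Ble deg (deg a)"
  define B1 where "B1 = Ble deg (deg b)"
  define Dp where "Dp = mult_val p a b - p a * p b"
  define Dq where "Dq = mult_val q a b - q a * q b"
  have "a \<noteq> one" "b \<noteq> one" using a b by auto
  have conv_prod: "conv p q a * conv p q b = (\<Sum>a1\<in>A1. \<Sum>a2\<in>A1. \<Sum>b1\<in>B1. \<Sum>b2\<in>B1.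
      real (comult a1 a2 a) * real (comult b1 b2 b) * (p a1 * p b1 * (q a2 * q b2)))"
  proof -
    have "conv p q a * conv p q b = (\<Sum>a1\<in>A1. \<Sum>a2\<in>A1. (real (comult a1 a2 a) * p a1 * q a2) * conv p q b)"
      unfolding conv_def[of p q a] A1_def sum_distrib_right ..
    also have "\<dots> = (\<Sum>a1\<in>A1. \<Sum>a2\<in>A1. \<Sum>b1\<in>B1. \<Sum>b2\<in>B1.
        (real (comult a1 a2 a) * p a1 * q a2) * (real (comult b1 b2 b) * p b1 * q b2))"
      unfolding conv_def[of p q b] B1_def sum_distrib_left ..
    finally show ?thesis by (simp add: algebra_simps)
  qed
  \<comment> \<open>By the induction hypothesis only the two extreme splittings of a and b survive.\<close>
  have summand: "real (comult a1 a2 a) * real (comult b1 b2 b) * (mult_val p a1 b1 * mult_val q a2 b2)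
      - real (comult a1 a2 a) * real (comult b1 b2 b) * (p a1 * p b1 * (q a2 * q b2))
    = (if a1 = a \<and> a2 = one \<and> b1 = b \<and> b2 = one then Dp else 0)
      + (if a1 = one \<and> a2 = a \<and> b1 = one \<and> b2 = b then Dq else 0)" for a1 a2 b1 b2
  proof (cases "comult a1 a2 a = 0 \<or> comult b1 b2 b = 0")
    case True
    have "comult a one a = 1" "comult one a a = 1" "comult b one b = 1" "comult one b b = 1"
      by (simp_all add: comult_one_left comult_one_right)
    then have "\<not> (a1 = a \<and> a2 = one \<and> b1 = b \<and> b2 = one)" "\<not> (a1 = one \<and> a2 = a \<and> b1 = one \<and> b2 = b)"
      using True by (metis zero_neq_one)+
    moreover have "real (comult a1 a2 a) * real (comult b1 b2 b) = 0" using True by simp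
    ultimately show ?thesis by (simp only: if_False mult_zero_left diff_self add_0_right)
  next
    case False
    then have deg: "deg a1 + deg a2 = deg a" "deg b1 + deg b2 = deg b" using comult_deg by auto
    consider (left) "a2 = one" "b2 = one" | (right) "a1 = one" "b1 = one"
      | (inner) "deg a1 + deg b1 < deg a + deg b" "deg a2 + deg b2 < deg a + deg b"
      using deg deg_eq_0_iff[of a1] deg_eq_0_iff[of a2] deg_eq_0_iff[of b1] deg_eq_0_iff[of b2] by linarith
    then show ?thesis
    proof cases
      case left
      then have "a1 = a" "b1 = b" using False by (auto simp: comult_one_right split: if_splits)
      then show ?thesis
        using left \<open>a \<noteq> one\<close> q_one by (simp add: mult_val_one_left comult_one_right Dp_def)
    next
      case right
      then have "a2 = a" "b2 = b" using False by (auto simp: comult_one_left split: if_splits)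
      then show ?thesis
        using right \<open>a \<noteq> one\<close> p_one by (simp add: mult_val_one_left comult_one_left Dq_def)
    next
      case inner
      then have "\<not> (a1 = a \<and> a2 = one \<and> b1 = b \<and> b2 = one)" "\<not> (a1 = one \<and> a2 = a \<and> b1 = one \<and> b2 = b)"
        using deg by auto
      then show ?thesis using p_mult[OF inner(1)] q_mult[OF inner(2)]
        by (simp only: if_False diff_self add_0_right)
    qed
  qed
  have "finite A1" "finite B1" "a \<in> A1" "one \<in> A1" "b \<in> B1" "one \<in> B1"
    unfolding A1_def B1_def by (simp_all add: finite_Ble)
  then have "mult_val (conv p q) a b - conv p q a * conv p q b = Dp + Dq"
    unfolding mult_val_conv conv_prod A1_def[symmetric] B1_def[symmetric]
    by (simp only: sum_subtractf[symmetric] summand sum.distrib sum4_delta)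
  then show ?thesis unfolding Dp_def Dq_def .
qed
lemma red_sum_nonneg:
  "(\<And>a. 0 < deg a \<Longrightarrow> deg a < deg \<sigma> \<Longrightarrow> 0 \<le> w a) \<Longrightarrow> 0 \<le> red_sum deg comult w w \<sigma>"
  unfolding red_sum_def by (intro sum_nonneg) auto

lemma abs_red_sum_le:
  fixes \<gamma> L :: real
  assumes w: "\<And>a. 0 < deg a \<Longrightarrow> deg a < deg \<sigma> \<Longrightarrow> 0 \<le> w a"
    and f: "\<And>a. 0 < deg a \<Longrightarrow> deg a < deg \<sigma> \<Longrightarrow> \<bar>f a\<bar> \<le> w a * L powr (\<gamma> * deg a)"
    and g: "\<And>a. 0 < deg a \<Longrightarrow> deg a < deg \<sigma> \<Longrightarrow> \<bar>g a\<bar> \<le> w a * L powr (\<gamma> * deg a)"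
  shows "\<bar>red_sum deg comult f g \<sigma>\<bar> \<le> red_sum deg comult w w \<sigma> * L powr (\<gamma> * deg \<sigma>)"
proof -
  define M where "M = {a. 0 < deg a \<and> deg a < deg \<sigma>}"
  have "\<bar>red_sum deg comult f g \<sigma>\<bar> \<le> (\<Sum>a\<in>M. \<Sum>b\<in>M. \<bar>real (comult a b \<sigma>) * f a * g b\<bar>)"
    unfolding red_sum_def M_def[symmetric]
    by (rule order_trans[OF sum_abs]) (intro sum_mono sum_abs)
  also have "\<dots> \<le> (\<Sum>a\<in>M. \<Sum>b\<in>M. real (comult a b \<sigma>) * w a * w b * L powr (\<gamma> * deg \<sigma>))"
  proof (intro sum_mono)
    fix a b assume a: "a \<in> M" and b: "b \<in> M"
    show "\<bar>real (comult a b \<sigma>) * f a * g b\<bar> \<le> real (comult a b \<sigma>) * w a * w b * L powr (\<gamma> * deg \<sigma>)"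
    proof (cases "comult a b \<sigma> = 0")
      case False
      then have deg: "deg a + deg b = deg \<sigma>" by (rule comult_deg)
      have "\<bar>f a\<bar> * \<bar>g b\<bar> \<le> (w a * L powr (\<gamma> * deg a)) * (w b * L powr (\<gamma> * deg b))"
        using a b f g w unfolding M_def by (intro mult_mono) auto
      also have "\<dots> = w a * w b * L powr (\<gamma> * deg \<sigma>)"
        unfolding deg[symmetric] by (simp add: powr_add algebra_simps)
      finally have "real (comult a b \<sigma>) * (\<bar>f a\<bar> * \<bar>g b\<bar>) \<le> real (comult a b \<sigma>) * (w a * w b * L powr (\<gamma> * deg \<sigma>))"
        by (intro mult_left_mono) auto
      then show ?thesis by (simp add: abs_mult algebra_simps)
    qed simp
  qed
  also have "\<dots> = red_sum deg comult w w \<sigma> * L powr (\<gamma> * deg \<sigma>)"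
    unfolding red_sum_def M_def by (simp add: sum_distrib_right)
  finally show ?thesis .
qed

lemma red_sum_regular:
  fixes \<gamma> :: real
  assumes "\<gamma> \<ge> 0"
    and regular: "\<And>a. 0 < deg a \<Longrightarrow> deg a < deg \<sigma> \<Longrightarrow> regular (\<gamma> * deg a) (\<lambda>s t. X s t a)"
  obtains C where "C \<ge> 0"
    "\<And>s u t L. \<bar>u-s\<bar> \<le> L \<Longrightarrow> \<bar>t-u\<bar> \<le> L \<Longrightarrow>
       \<bar>red_sum deg comult (X s u) (X u t) \<sigma>\<bar> \<le> C * L powr (\<gamma> * deg \<sigma>)"
proof -
  define w where "w a = (SOME K. K \<ge> 0 \<and> (\<forall>s t. \<bar>X s t a\<bar> \<le> K * \<bar>t-s\<bar> powr (\<gamma> * deg a)))" for a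
  have w: "w a \<ge> 0 \<and> (\<forall>s t. \<bar>X s t a\<bar> \<le> w a * \<bar>t-s\<bar> powr (\<gamma> * deg a))"
    if "0 < deg a" "deg a < deg \<sigma>" for a
    unfolding w_def by (rule someI_ex) (rule regular_nonneg_const[OF regular[OF that]])
  have X: "\<bar>X x y a\<bar> \<le> w a * L powr (\<gamma> * deg a)"
    if "0 < deg a" "deg a < deg \<sigma>" "\<bar>y - x\<bar> \<le> L" for x y L a
  proof -
    have "\<bar>X x y a\<bar> \<le> w a * \<bar>y-x\<bar> powr (\<gamma> * deg a)" using w[OF that(1,2)] by blast
    also have "\<dots> \<le> w a * L powr (\<gamma> * deg a)"
      using w[OF that(1,2)] that(3) assms(1) by (intro mult_left_mono powr_mono2) auto
    finally show ?thesis .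
  qed
  show ?thesis
  proof
    show "0 \<le> red_sum deg comult w w \<sigma>" by (rule red_sum_nonneg) (use w in auto)
    fix s u t L :: real assume "\<bar>u-s\<bar> \<le> L" "\<bar>t-u\<bar> \<le> L"
    then show "\<bar>red_sum deg comult (X s u) (X u t) \<sigma>\<bar> \<le> red_sum deg comult w w \<sigma> * L powr (\<gamma> * deg \<sigma>)"
      by (intro abs_red_sum_le) (use w X in auto)
  qed
qed

lemma conv_idempotent_eq_0:
  assumes idem: "\<And>\<sigma>. deg \<sigma> \<le> n \<Longrightarrow> e \<sigma> = conv e e \<sigma>" and one: "e one = 1"
  shows "0 < deg \<sigma> \<Longrightarrow> deg \<sigma> \<le> n \<Longrightarrow> e \<sigma> = 0"
proof (induction "deg \<sigma>" arbitrary: \<sigma> rule: less_induct)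
  case less
  have "red_sum deg comult e e \<sigma> = 0"
    unfolding red_sum_def by (intro sum.neutral ballI) (use less in auto)
  then have "e \<sigma> = 2 * e \<sigma>" using idem[OF less.prems(2)] conv_split[OF less.prems(1)] one by simp
  then show ?case by simp
qed

lemma qtab_stable: "deg \<sigma> \<le> n \<Longrightarrow> qtab e deg comult n \<sigma> = qtab e deg comult (deg \<sigma>) \<sigma>"
  by (induction n) (auto simp: le_Suc_eq)
lemma qtab_rec:
  assumes "2 \<le> deg \<sigma>"
  shows "qtab e deg comult (deg \<sigma>) \<sigma> = 1 / (2 powr e (deg \<sigma>) - 2) *
     red_sum deg comult (\<lambda>a. qtab e deg comult (deg a) a) (\<lambda>a. qtab e deg comult (deg a) a) \<sigma>"
proof -
  define n where "n = deg \<sigma> - 1"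
  have n: "deg \<sigma> = Suc n" "1 \<le> n" using assms unfolding n_def by auto
  have "red_sum deg comult (qtab e deg comult n) (qtab e deg comult n) \<sigma>
     = red_sum deg comult (\<lambda>a. qtab e deg comult (deg a) a) (\<lambda>a. qtab e deg comult (deg a) a) \<sigma>"
    by (rule red_sum_cong; rule qtab_stable) (use n in auto)
  then show ?thesis using n by simp
qed
lemma nondegenerate_comult_split:
  assumes "nondegenerate one deg comult" and "2 \<le> deg \<sigma>"
  obtains a b where "comult a b \<sigma> > 0" "0 < deg a" "deg a < deg \<sigma>" "0 < deg b" "deg b < deg \<sigma>"
proof -
  have "\<not> primitive one comult \<sigma>" using assms unfolding nondegenerate_def by auto
  then obtain a b where ab: "comult a b \<sigma>
      \<noteq> (if a = \<sigma> \<and> b = one then 1 else 0) + (if a = one \<and> b = \<sigma> then 1 else 0)"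
    unfolding primitive_def by blast
  have "\<sigma> \<noteq> one" using assms by auto
  then have "a \<noteq> one" "b \<noteq> one" using ab by (auto simp: comult_one_left comult_one_right)
  with ab have "comult a b \<sigma> \<noteq> 0" by simp
  moreover have "0 < deg a" "0 < deg b" using \<open>a \<noteq> one\<close> \<open>b \<noteq> one\<close> deg_eq_0_iff by auto
  ultimately show ?thesis using comult_deg[of a b \<sigma>] by (intro that[of a b]) auto
qed
lemma red_sum_pos:
  assumes "nondegenerate one deg comult" and "2 \<le> deg \<sigma>"
    and w: "\<And>a. 0 < deg a \<Longrightarrow> deg a < deg \<sigma> \<Longrightarrow> 0 < w a"
  shows "0 < red_sum deg comult w w \<sigma>"
proof -
  obtain a b where ab: "comult a b \<sigma> > 0" "0 < deg a" "deg a < deg \<sigma>" "0 < deg b" "deg b < deg \<sigma>"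
    using nondegenerate_comult_split[OF assms(1,2)] by blast
  define M where "M = {a. 0 < deg a \<and> deg a < deg \<sigma>}"
  have M: "finite M" "a \<in> M" "b \<in> M" using ab finite_mid_degrees unfolding M_def by auto
  have nonneg: "0 \<le> real (comult x y \<sigma>) * w x * w y" if "x \<in> M" "y \<in> M" for x y
    using w that unfolding M_def by (simp add: less_imp_le)
  have "0 < real (comult a b \<sigma>) * w a * w b" using ab w by auto
  also have "\<dots> \<le> (\<Sum>y\<in>M. real (comult a y \<sigma>) * w a * w y)"
    using M nonneg by (intro member_le_sum) auto
  also have "\<dots> \<le> (\<Sum>x\<in>M. \<Sum>y\<in>M. real (comult x y \<sigma>) * w x * w y)"
    using M nonneg by (intro member_le_sum[where f="\<lambda>x. \<Sum>y\<in>M. real (comult x y \<sigma>) * w x * w y"] sum_nonneg) auto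
  finally show ?thesis unfolding red_sum_def M_def .
qed
lemma qtab_pos:
  assumes nd: "nondegenerate one deg comult" and e: "\<And>m. 2 \<le> m \<Longrightarrow> e m > 1"
  shows "0 < qtab e deg comult (deg \<sigma>) \<sigma>"
proof (induction "deg \<sigma>" arbitrary: \<sigma> rule: less_induct)
  case less
  show ?case
  proof (cases "deg \<sigma> \<le> 1")
    case True
    then show ?thesis by (cases "deg \<sigma>") auto
  next
    case False
    then have "2 powr e (deg \<sigma>) > (2::real)" using powr_less_mono[OF e, of "deg \<sigma>" 2] by simp
    moreover have "0 < red_sum deg comult (\<lambda>a. qtab e deg comult (deg a) a) (\<lambda>a. qtab e deg comult (deg a) a) \<sigma>"
      using False by (intro red_sum_pos[OF nd] less.hyps) auto
    ultimately show ?thesis using False by (simp add: qtab_rec)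
  qed
qed
end

section \<open>Rough paths and the character q_gamma\<close>

context comb_hopf_alg
begin

context
  fixes \<gamma> :: real and X :: "real \<Rightarrow> real \<Rightarrow> 'a \<Rightarrow> real"
  assumes X: "rough_path \<gamma> one deg mult comult X"
begin

lemma rough_path_one: "X s t one = 1"
  using X unfolding rough_path_def by blast

lemma rough_path_chen: "X s t \<sigma> = conv (X s u) (X u t) \<sigma>"
  using X unfolding rough_path_def conv_def by blast

lemma rough_path_split:
  "0 < deg \<sigma> \<Longrightarrow> X s t \<sigma> = X s u \<sigma> + X u t \<sigma> + red_sum deg comult (X s u) (X u t) \<sigma>"
  using rough_path_chen[of s t \<sigma> u] conv_split[of \<sigma> "X s u" "X u t"] rough_path_one by simp

lemma rough_path_regular: "0 < deg \<sigma> \<Longrightarrow> regular (\<gamma> * deg \<sigma>) (\<lambda>s t. X s t \<sigma>)"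
proof -
  assume \<sigma>: "0 < deg \<sigma>"
  obtain K where "\<And>s t. s \<noteq> t \<Longrightarrow> \<bar>X s t \<sigma>\<bar> \<le> K * \<bar>t - s\<bar> powr (\<gamma> * deg \<sigma>)"
    using X unfolding rough_path_def by blast
  moreover have "X s s \<sigma> = 0" for s
    using conv_idempotent_eq_0[of "deg \<sigma>" "X s s" \<sigma>] \<sigma> rough_path_chen rough_path_one by auto
  ultimately show ?thesis by (rule regular_if_off_diagonal)
qed

end

end

locale rough_setting = comb_hopf_alg +
  fixes \<gamma> :: real and N :: nat
  assumes \<gamma>_pos: "0 < \<gamma>" and \<gamma>_le_1: "\<gamma> \<le> 1" and N_def: "N = nat \<lfloor>1/\<gamma>\<rfloor>"
begin

lemma one_le_N: "1 \<le> N"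
  using \<gamma>_pos \<gamma>_le_1 unfolding N_def by (simp add: le_nat_iff le_floor_iff)

lemma one_less_\<gamma>_mult: "N < m \<Longrightarrow> 1 < \<gamma> * real m"
proof -
  assume "N < m"
  have "1/\<gamma> < of_int \<lfloor>1/\<gamma>\<rfloor> + 1" by linarith
  also have "of_int \<lfloor>1/\<gamma>\<rfloor> = real N" unfolding N_def using \<gamma>_pos by simp
  also have "real N + 1 \<le> real m" using \<open>N < m\<close> by simp
  finally show ?thesis using \<gamma>_pos by (simp add: field_simps)
qed

lemma rough_path_unique:
  assumes X1: "rough_path \<gamma> one deg mult comult X1" and X2: "rough_path \<gamma> one deg mult comult X2"
    and agree: "\<And>s t \<sigma>. deg \<sigma> \<le> N \<Longrightarrow> X1 s t \<sigma> = X2 s t \<sigma>"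
  shows "X1 s t \<sigma> = X2 s t \<sigma>"
proof (induction "deg \<sigma>" arbitrary: \<sigma> s t rule: less_induct)
  case less
  show ?case
  proof (cases "deg \<sigma> \<le> N")
    case False
    then have \<sigma>: "0 < deg \<sigma>" by simp
    define Z where "Z s t = X1 s t \<sigma> - X2 s t \<sigma>" for s t
    \<comment> \<open>Lower degrees agree, so Chen's relation makes the difference additive.\<close>
    have "red_sum deg comult (X1 s u) (X1 u t) \<sigma> = red_sum deg comult (X2 s u) (X2 u t) \<sigma>" for s u t
      by (rule red_sum_cong) (use less in auto)
    then have "Z s t = Z s u + Z u t" for s u t
      unfolding Z_def using rough_path_split[OF X1 \<sigma>, of s t u] rough_path_split[OF X2 \<sigma>, of s t u] by simp
    moreover have "regular (\<gamma> * deg \<sigma>) Z"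
      unfolding Z_def using \<sigma> by (intro regular_minus rough_path_regular X1 X2)
    then obtain K where "\<And>s t. \<bar>Z s t\<bar> \<le> K * \<bar>t-s\<bar> powr (\<gamma> * deg \<sigma>)"
      unfolding regular_def by blast
    ultimately have "Z s t = 0"
      using one_less_\<gamma>_mult[of "deg \<sigma>"] False by (intro additive_regular_eq_0) auto
    then show ?thesis unfolding Z_def by simp
  qed (rule agree)
qed

abbreviation qg where
  "qg \<equiv> qgamma \<gamma> N deg comult"

lemma qgamma_pos: "nondegenerate one deg comult \<Longrightarrow> 0 < qg \<sigma>"
  unfolding qgamma_def using one_less_\<gamma>_mult by (intro qtab_pos) auto

lemma qgamma_one: "qg one = 1"
  unfolding qgamma_def by simp

lemma qgamma_rec:
  assumes "N < deg \<sigma>"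
  shows "qg \<sigma> = 1 / (2 powr (\<gamma> * deg \<sigma>) - 2) * red_sum deg comult qg qg \<sigma>"
  using qtab_rec[of \<sigma>] assms one_le_N unfolding qgamma_def by simp

lemma rough_path_bound_low_degrees:
  assumes nd: "nondegenerate one deg comult" and X: "rough_path \<gamma> one deg mult comult X"
  obtains c where "c \<ge> 1"
    "\<And>\<sigma> s t. 0 < deg \<sigma> \<Longrightarrow> deg \<sigma> \<le> N \<Longrightarrow> \<bar>X s t \<sigma>\<bar> \<le> c * qg \<sigma> * \<bar>t-s\<bar> powr (\<gamma> * deg \<sigma>)"
proof -
  define S where "S = {\<sigma>. 0 < deg \<sigma> \<and> deg \<sigma> \<le> N}"
  have "finite S" unfolding S_def by (rule finite_subset[OF _ finite_Ble[of N]]) auto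
  define K where "K \<sigma> = (SOME K. K \<ge> 0 \<and> (\<forall>s t. \<bar>X s t \<sigma>\<bar> \<le> K * \<bar>t-s\<bar> powr (\<gamma> * deg \<sigma>)))" for \<sigma>
  have K: "\<bar>X s t \<sigma>\<bar> \<le> K \<sigma> * \<bar>t-s\<bar> powr (\<gamma> * deg \<sigma>)" if "0 < deg \<sigma>" for \<sigma> s t
    using someI_ex[OF regular_nonneg_const[OF rough_path_regular[OF X that]]] unfolding K_def by blast
  define c where "c = Max (insert 1 ((\<lambda>\<sigma>. K \<sigma> / qg \<sigma>) ` S))"
  show ?thesis
  proof
    show "1 \<le> c" unfolding c_def using \<open>finite S\<close> by simp
    fix \<sigma> s t assume \<sigma>: "0 < deg \<sigma>" "deg \<sigma> \<le> N"
    have "K \<sigma> / qg \<sigma> \<le> c" unfolding c_def using \<open>finite S\<close> \<sigma> by (intro Max_ge) (auto simp: S_def)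
    then have "K \<sigma> \<le> c * qg \<sigma>" using qgamma_pos[OF nd, of \<sigma>] by (simp add: divide_le_eq)
    then show "\<bar>X s t \<sigma>\<bar> \<le> c * qg \<sigma> * \<bar>t-s\<bar> powr (\<gamma> * deg \<sigma>)"
      using K[OF \<sigma>(1), of s t] by (meson mult_right_mono order_trans powr_ge_zero)
  qed
qed

lemma rough_path_bound_step:
  assumes nd: "nondegenerate one deg comult" and X: "rough_path \<gamma> one deg mult comult X"
    and c: "c \<ge> 1" and \<sigma>: "N < deg \<sigma>"
    and lower: "\<And>a s t. 0 < deg a \<Longrightarrow> deg a < deg \<sigma> \<Longrightarrow>
                  \<bar>X s t a\<bar> \<le> c ^ deg a * qg a * \<bar>t-s\<bar> powr (\<gamma> * deg a)"
  shows "\<bar>X s t \<sigma>\<bar> \<le> c ^ deg \<sigma> * qg \<sigma> * \<bar>t-s\<bar> powr (\<gamma> * deg \<sigma>)"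
proof -
  define \<theta> where "\<theta> = \<gamma> * deg \<sigma>"
  have \<theta>: "1 < \<theta>" unfolding \<theta>_def using \<sigma> by (rule one_less_\<gamma>_mult)
  obtain K where K: "\<And>s t. \<bar>X s t \<sigma>\<bar> \<le> K * \<bar>t-s\<bar> powr \<theta>"
    using rough_path_regular[OF X, of \<sigma>] \<sigma> unfolding regular_def \<theta>_def by auto
  define w where "w a = c ^ deg a * qg a" for a
  define B where "B = red_sum deg comult w w \<sigma> / 2 powr \<theta>"
  have "red_sum deg comult w w \<sigma> = c ^ deg \<sigma> * red_sum deg comult qg qg \<sigma>"
    unfolding red_sum_def w_def sum_distrib_left
    by (intro sum.cong refl) (auto simp: power_add[symmetric] dest!: comult_deg)
  \<comment> \<open>The recursion defining q_gamma is exactly the fixed point of the dyadic splitting estimate.\<close>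
  then have "B / (1 - 2 powr (1-\<theta>)) = c ^ deg \<sigma> * qg \<sigma>"
    using qgamma_rec[OF \<sigma>] powr_less_mono[OF \<theta>, of 2]
    by (simp add: B_def \<theta>_def powr_diff field_simps)
  moreover have "\<bar>X s t \<sigma>\<bar> \<le> B / (1 - 2 powr (1-\<theta>)) * \<bar>t-s\<bar> powr \<theta>"
  proof (rule midpoint_split_bound[OF \<theta>, where K=K])
    show "0 \<le> B" unfolding B_def w_def
      using c qgamma_pos[OF nd] by (intro divide_nonneg_pos red_sum_nonneg) (auto intro: less_imp_le)
    show "X s t \<sigma> = X s ((s+t)/2) \<sigma> + X ((s+t)/2) t \<sigma> + red_sum deg comult (X s ((s+t)/2)) (X ((s+t)/2) t) \<sigma>"
      for s t using \<sigma> by (intro rough_path_split[OF X]) simp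
    show "\<bar>red_sum deg comult (X s ((s+t)/2)) (X ((s+t)/2) t) \<sigma>\<bar> \<le> B * \<bar>t-s\<bar> powr \<theta>" for s t
    proof -
      have e: "(s+t)/2 - s = (t-s)/2" "t - (s+t)/2 = (t-s)/2" by (simp_all add: field_simps)
      have half: "\<bar>(s+t)/2 - s\<bar> = \<bar>t-s\<bar>/2" "\<bar>t - (s+t)/2\<bar> = \<bar>t-s\<bar>/2"
        unfolding e by simp_all
      have "\<bar>red_sum deg comult (X s ((s+t)/2)) (X ((s+t)/2) t) \<sigma>\<bar>
          \<le> red_sum deg comult w w \<sigma> * (\<bar>t-s\<bar>/2) powr (\<gamma> * deg \<sigma>)"
      proof (rule abs_red_sum_le)
        fix a assume a: "0 < deg a" "deg a < deg \<sigma>"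
        show "0 \<le> w a" unfolding w_def using c qgamma_pos[OF nd, of a] by simp
        show "\<bar>X s ((s+t)/2) a\<bar> \<le> w a * (\<bar>t-s\<bar>/2) powr (\<gamma> * deg a)"
          using lower[OF a, of s "(s+t)/2"] unfolding half w_def .
        show "\<bar>X ((s+t)/2) t a\<bar> \<le> w a * (\<bar>t-s\<bar>/2) powr (\<gamma> * deg a)"
          using lower[OF a, of "(s+t)/2" t] unfolding half w_def .
      qed
      then show ?thesis unfolding B_def \<theta>_def by (simp add: powr_divide)
    qed
    show "\<bar>X s t \<sigma>\<bar> \<le> K * \<bar>t-s\<bar> powr \<theta>" for s t by (rule K)
  qed
  ultimately show ?thesis unfolding \<theta>_def by simp
qed

lemma rough_path_qgamma_bound:
  assumes nd: "nondegenerate one deg comult" and X: "rough_path \<gamma> one deg mult comult X"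
  shows "\<exists>c>0. \<forall>s t \<sigma>. \<bar>X s t \<sigma>\<bar> \<le> c ^ deg \<sigma> * qg \<sigma> * hpow \<bar>t - s\<bar> (\<gamma> * deg \<sigma>)"
proof -
  obtain c where c: "c \<ge> 1" and low: "\<And>\<sigma> s t. 0 < deg \<sigma> \<Longrightarrow> deg \<sigma> \<le> N \<Longrightarrow>
      \<bar>X s t \<sigma>\<bar> \<le> c * qg \<sigma> * \<bar>t-s\<bar> powr (\<gamma> * deg \<sigma>)"
    using rough_path_bound_low_degrees[OF nd X] by blast
  have bound: "\<bar>X s t \<sigma>\<bar> \<le> c ^ deg \<sigma> * qg \<sigma> * \<bar>t-s\<bar> powr (\<gamma> * deg \<sigma>)" if "0 < deg \<sigma>" for \<sigma> s t
    using that
  proof (induction "deg \<sigma>" arbitrary: \<sigma> s t rule: less_induct)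
    case less
    show ?case
    proof (cases "deg \<sigma> \<le> N")
      case True
      have "c * qg \<sigma> \<le> c ^ deg \<sigma> * qg \<sigma>"
        using c less.prems qgamma_pos[OF nd, of \<sigma>] by (intro mult_right_mono power_increasing[of 1 _ c, simplified]) auto
      then show ?thesis using low[OF less.prems True, of s t] by (meson mult_right_mono order_trans powr_ge_zero)
    next
      case False
      show ?thesis
      proof (rule rough_path_bound_step[OF nd X c])
        show "N < deg \<sigma>" using False by simp
        fix a s t assume "0 < deg a" "deg a < deg \<sigma>"
        then show "\<bar>X s t a\<bar> \<le> c ^ deg a * qg a * \<bar>t-s\<bar> powr (\<gamma> * deg a)" using less.hyps by blast
      qed
    qed
  qed
  show ?thesis
  proof (intro exI[of _ c] conjI allI)
    fix s t \<sigma>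
    show "\<bar>X s t \<sigma>\<bar> \<le> c ^ deg \<sigma> * qg \<sigma> * hpow \<bar>t - s\<bar> (\<gamma> * deg \<sigma>)"
    proof (cases "deg \<sigma> = 0")
      case True
      then show ?thesis using rough_path_one[OF X] by (simp add: deg_eq_0_iff hpow_def qgamma_one)
    next
      case False
      then show ?thesis using bound[of \<sigma> s t] \<gamma>_pos by (simp add: hpow_def)
    qed
  qed (use c in simp)
qed

end

section \<open>Extension of a truncated rough path\<close>

locale truncated_rough_path = rough_setting +
  fixes Y :: "real \<Rightarrow> real \<Rightarrow> 'a \<Rightarrow> real"
  assumes trunc: "trunc_rough_path \<gamma> N one deg mult comult Y"
begin

lemma Y_one: "Y s t one = 1"
  using trunc unfolding trunc_rough_path_def by blast

lemma Y_mult: "deg a + deg b \<le> N \<Longrightarrow> mult_val (Y s t) a b = Y s t a * Y s t b"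
  using trunc unfolding trunc_rough_path_def mult_val_def by blast

lemma Y_chen: "deg \<sigma> \<le> N \<Longrightarrow> Y s t \<sigma> = conv (Y s u) (Y u t) \<sigma>"
  using trunc unfolding trunc_rough_path_def conv_def by blast

lemma Y_regular:
  assumes \<sigma>: "0 < deg \<sigma>" "deg \<sigma> \<le> N"
  shows "regular (\<gamma> * deg \<sigma>) (\<lambda>s t. Y s t \<sigma>)"
proof -
  obtain K where "\<And>s t. s \<noteq> t \<Longrightarrow> \<bar>Y s t \<sigma>\<bar> \<le> K * \<bar>t - s\<bar> powr (\<gamma> * deg \<sigma>)"
    using trunc \<sigma>(2) unfolding trunc_rough_path_def by blast
  moreover have "Y s s \<sigma> = 0" for s
    using conv_idempotent_eq_0[of N "Y s s" \<sigma>] \<sigma> Y_chen Y_one by auto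
  ultimately show ?thesis by (rule regular_if_off_diagonal)
qed

text \<open>
  Above degree N the new level is the germ (defined below) minus its sewing. The germ routes
  everything through the base point 0, so it only involves the lower levels ext n.
\<close>
primrec ext :: "nat \<Rightarrow> real \<Rightarrow> real \<Rightarrow> 'a \<Rightarrow> real" where
  "ext 0 s t \<sigma> = (if deg \<sigma> = 0 then Y s t \<sigma> else 0)"
| "ext (Suc n) s t \<sigma> =
     (if deg \<sigma> \<le> n then ext n s t \<sigma>
      else if deg \<sigma> = Suc n then
        (if Suc n \<le> N then Y s t \<sigma>
         else (let A = (\<lambda>s' t'. red_sum deg comult (ext n s' 0) (ext n 0 t') \<sigma>
                               - red_sum deg comult (ext n 0 s') (ext n s' 0) \<sigma>)
               in A s t - dyadic_sewing A 1 s t))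
      else 0)"

definition germ :: "nat \<Rightarrow> 'a \<Rightarrow> real \<Rightarrow> real \<Rightarrow> real" where
  "germ n \<sigma> s t = red_sum deg comult (ext n s 0) (ext n 0 t) \<sigma> - red_sum deg comult (ext n 0 s) (ext n s 0) \<sigma>"

lemma ext_new_degree:
  "deg \<sigma> = Suc n \<Longrightarrow> N \<le> n \<Longrightarrow> ext (Suc n) s t \<sigma> = germ n \<sigma> s t - dyadic_sewing (germ n \<sigma>) 1 s t"
  unfolding germ_def by (simp add: Let_def)

lemma ext_eq_0: "n < deg \<sigma> \<Longrightarrow> ext n s t \<sigma> = 0"
  by (induction n) auto

lemma ext_le_N: "n \<le> N \<Longrightarrow> ext n s t \<sigma> = (if deg \<sigma> \<le> n then Y s t \<sigma> else 0)"
  by (induction n) auto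

lemma ext_stable: "deg \<sigma> \<le> n \<Longrightarrow> ext n s t \<sigma> = ext (deg \<sigma>) s t \<sigma>"
  by (induction n) (auto simp: le_Suc_eq)

definition ext_invariant :: "nat \<Rightarrow> bool" where
  "ext_invariant n \<longleftrightarrow> (\<forall>s t. ext n s t one = 1) \<and>
     (\<forall>s u t \<sigma>. deg \<sigma> \<le> n \<longrightarrow> ext n s t \<sigma> = conv (ext n s u) (ext n u t) \<sigma>) \<and>
     (\<forall>s t a b. deg a + deg b \<le> n \<longrightarrow> mult_val (ext n s t) a b = ext n s t a * ext n s t b) \<and>
     (\<forall>\<sigma>. 0 < deg \<sigma> \<longrightarrow> deg \<sigma> \<le> n \<longrightarrow> regular (\<gamma> * deg \<sigma>) (\<lambda>s t. ext n s t \<sigma>))"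

lemma ext_invariantD:
  assumes "ext_invariant n"
  shows "ext n s t one = 1"
    and "deg \<sigma> \<le> n \<Longrightarrow> ext n s t \<sigma> = conv (ext n s u) (ext n u t) \<sigma>"
    and "deg a + deg b \<le> n \<Longrightarrow> mult_val (ext n s t) a b = ext n s t a * ext n s t b"
    and "0 < deg \<sigma> \<Longrightarrow> deg \<sigma> \<le> n \<Longrightarrow> regular (\<gamma> * deg \<sigma>) (\<lambda>s t. ext n s t \<sigma>)"
  using assms unfolding ext_invariant_def by blast+

lemma ext_invariant_le_N:
  assumes n: "n \<le> N"
  shows "ext_invariant n"
  unfolding ext_invariant_def ext_le_N[OF n]
proof (intro conjI allI impI)
  fix s u t \<sigma> assume "deg \<sigma> \<le> n"
  then have "Y s t \<sigma> = conv (Y s u) (Y u t) \<sigma>" using n by (intro Y_chen) simp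
  also have "\<dots> = conv (\<lambda>a. if deg a \<le> n then Y s u a else 0) (\<lambda>a. if deg a \<le> n then Y u t a else 0) \<sigma>"
    using \<open>deg \<sigma> \<le> n\<close> by (intro conv_cong) auto
  finally show "(if deg \<sigma> \<le> n then Y s t \<sigma> else 0)
      = conv (\<lambda>a. if deg a \<le> n then Y s u a else 0) (\<lambda>a. if deg a \<le> n then Y u t a else 0) \<sigma>"
    using \<open>deg \<sigma> \<le> n\<close> by simp
next
  fix s t a b assume ab: "deg a + deg b \<le> n"
  have "mult_val (\<lambda>c. if deg c \<le> n then Y s t c else 0) a b = mult_val (Y s t) a b"
    using ab by (intro mult_val_cong) auto
  then show "mult_val (\<lambda>c. if deg c \<le> n then Y s t c else 0) a b
      = (if deg a \<le> n then Y s t a else 0) * (if deg b \<le> n then Y s t b else 0)"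
    using ab n Y_mult by simp
qed (use Y_one Y_regular n in auto)

lemma ext_counit:
  assumes "ext_invariant n" and "deg b \<le> n"
  shows "ext n s s b = counit b"
proof (cases "deg b = 0")
  case True
  then show ?thesis using ext_invariantD(1)[OF assms(1)] by (simp add: deg_eq_0_iff counit_def)
next
  case False
  then have "ext n s s b = 0"
    using conv_idempotent_eq_0[of n "ext n s s" b] ext_invariantD(1,2)[OF assms(1)] assms(2) by auto
  then show ?thesis using False by (auto simp: counit_def)
qed

lemma germ_delta:
  assumes I: "ext_invariant n" and \<sigma>: "deg \<sigma> = Suc n"
  shows "germ n \<sigma> s t - germ n \<sigma> s u - germ n \<sigma> u t = red_sum deg comult (ext n s u) (ext n u t) \<sigma>"
proof -
  define U where "U = ext n s 0"
  define V where "V = ext n 0 u"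
  define W where "W = ext n u 0"
  define Z where "Z = ext n 0 t"
  define G where "G = conv V W"
  have \<sigma>_pos: "0 < deg \<sigma>" using \<sigma> by simp
  have at_\<sigma>: "U \<sigma> = 0" "V \<sigma> = 0" "W \<sigma> = 0" "Z \<sigma> = 0"
    unfolding U_def V_def W_def Z_def using \<sigma> ext_eq_0 by auto
  have at_one: "U one = 1" "V one = 1" "W one = 1" "Z one = 1"
    unfolding U_def V_def W_def Z_def using ext_invariantD(1)[OF I] by auto
  have chen: "ext n x z a = conv (ext n x y) (ext n y z) a" if "deg a < deg \<sigma>" for x y z a
    using ext_invariantD(2)[OF I] that \<sigma> by simp
  have G: "G b = counit b" if "deg b < deg \<sigma>" for b
    unfolding G_def V_def W_def using chen[OF that, of 0 0 u] ext_counit[OF I] that \<sigma> by simp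
  \<comment> \<open>Expand everything through the base point 0 and use coassociativity.\<close>
  have "red_sum deg comult (ext n s u) (ext n u t) \<sigma> = red_sum deg comult (conv U V) (conv W Z) \<sigma>"
    unfolding U_def V_def W_def Z_def by (rule red_sum_cong) (use chen in auto)
  also have "\<dots> = conv (conv U V) (conv W Z) \<sigma> - conv U V \<sigma> - conv W Z \<sigma>"
    using conv_split[OF \<sigma>_pos, of "conv U V" "conv W Z"] by (simp add: conv_one at_one)
  also have "conv (conv U V) (conv W Z) \<sigma> = conv U (conv G Z) \<sigma>"
    unfolding G_def by (simp add: conv_assoc conv_cong[OF refl conv_assoc])
  also have "\<dots> = conv G Z \<sigma> + red_sum deg comult U Z \<sigma>"
  proof -
    have "red_sum deg comult U (conv G Z) \<sigma> = red_sum deg comult U Z \<sigma>"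
    proof (rule red_sum_cong)
      fix a assume a: "0 < deg a" "deg a < deg \<sigma>"
      have "conv G Z a = conv counit Z a" by (rule conv_cong) (use a G in auto)
      then show "conv G Z a = Z a" by (simp add: conv_counit_left)
    qed simp
    then show ?thesis using conv_split[OF \<sigma>_pos, of U "conv G Z"] at_\<sigma> at_one by (simp add: conv_one G_def)
  qed
  also have "conv G Z \<sigma> = G \<sigma>"
  proof -
    have "red_sum deg comult G Z \<sigma> = red_sum deg comult counit Z \<sigma>"
      by (rule red_sum_cong) (use G in auto)
    also have "\<dots> = 0" unfolding red_sum_def counit_def by (intro sum.neutral) auto
    finally show ?thesis using conv_split[OF \<sigma>_pos, of G Z] at_\<sigma> at_one by (simp add: G_def conv_one)
  qed
  finally show ?thesis
    using conv_split[OF \<sigma>_pos, of U V] conv_split[OF \<sigma>_pos, of W Z] conv_split[OF \<sigma>_pos, of V W] at_\<sigma> at_one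
    unfolding germ_def G_def U_def V_def W_def Z_def by simp
qed

lemma germ_sewing:
  assumes I: "ext_invariant n" and \<sigma>: "deg \<sigma> = Suc n" and N: "N \<le> n"
  shows "dyadic_sewing (germ n \<sigma>) 1 s t = dyadic_sewing (germ n \<sigma>) 1 s u + dyadic_sewing (germ n \<sigma>) 1 u t"
    and "\<exists>K. \<forall>s t. s < t \<longrightarrow> \<bar>germ n \<sigma> s t - dyadic_sewing (germ n \<sigma>) 1 s t\<bar> \<le> K * (t-s) powr (\<gamma> * deg \<sigma>)"
proof -
  obtain C where C: "C \<ge> 0" "\<And>s u t L. \<bar>u-s\<bar> \<le> L \<Longrightarrow> \<bar>t-u\<bar> \<le> L \<Longrightarrow>
      \<bar>red_sum deg comult (ext n s u) (ext n u t) \<sigma>\<bar> \<le> C * L powr (\<gamma> * deg \<sigma>)"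
    using red_sum_regular[of \<gamma> \<sigma> "ext n"] \<gamma>_pos ext_invariantD(4)[OF I] \<sigma> by auto
  have \<theta>: "1 < \<gamma> * deg \<sigma>" using N \<sigma> by (intro one_less_\<gamma>_mult) simp
  have delta: "\<bar>germ n \<sigma> a c - germ n \<sigma> a b - germ n \<sigma> b c\<bar> \<le> C * (c-a) powr (\<gamma> * deg \<sigma>)"
    if "a \<le> b" "b \<le> c" for a b c
    using germ_delta[OF I \<sigma>] C(2)[where s=a and u=b and t=c and L="c-a"] that by auto
  show "dyadic_sewing (germ n \<sigma>) 1 s t = dyadic_sewing (germ n \<sigma>) 1 s u + dyadic_sewing (germ n \<sigma>) 1 u t"
    by (rule dyadic_sewing_additive[OF \<theta> C(1) delta]) auto
  show "\<exists>K. \<forall>s t. s < t \<longrightarrow> \<bar>germ n \<sigma> s t - dyadic_sewing (germ n \<sigma>) 1 s t\<bar> \<le> K * (t-s) powr (\<gamma> * deg \<sigma>)"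
    by (rule dyadic_sewing_approx[OF \<theta> C(1) delta])
qed

lemma ext_Suc_split:
  assumes I: "ext_invariant n" and \<sigma>: "deg \<sigma> = Suc n" and N: "N \<le> n"
  shows "ext (Suc n) s t \<sigma> = ext (Suc n) s u \<sigma> + ext (Suc n) u t \<sigma> + red_sum deg comult (ext n s u) (ext n u t) \<sigma>"
  using germ_sewing(1)[OF I \<sigma> N, of s t u] germ_delta[OF I \<sigma>, of s t u] ext_new_degree[OF \<sigma> N] by simp

lemma ext_Suc_chen:
  assumes I: "ext_invariant n" and \<sigma>: "deg \<sigma> \<le> Suc n" and N: "N \<le> n"
  shows "ext (Suc n) s t \<sigma> = conv (ext (Suc n) s u) (ext (Suc n) u t) \<sigma>"
proof (cases "deg \<sigma> \<le> n")
  case True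
  then have "ext (Suc n) s t \<sigma> = conv (ext n s u) (ext n u t) \<sigma>" using ext_invariantD(2)[OF I] by simp
  also have "\<dots> = conv (ext (Suc n) s u) (ext (Suc n) u t) \<sigma>" by (rule conv_cong) (use True in auto)
  finally show ?thesis .
next
  case False
  then have \<sigma>': "deg \<sigma> = Suc n" "0 < deg \<sigma>" using \<sigma> by auto
  have "red_sum deg comult (ext (Suc n) s u) (ext (Suc n) u t) \<sigma> = red_sum deg comult (ext n s u) (ext n u t) \<sigma>"
    by (rule red_sum_cong) (use \<sigma>' in auto)
  then show ?thesis
    using conv_split[OF \<sigma>'(2)] ext_Suc_split[OF I \<sigma>'(1) N] ext_invariantD(1)[OF I] \<sigma>' by simp
qed

lemma ext_Suc_regular:
  assumes I: "ext_invariant n" and \<sigma>: "deg \<sigma> = Suc n" and N: "N \<le> n"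
  shows "regular (\<gamma> * deg \<sigma>) (\<lambda>s t. ext (Suc n) s t \<sigma>)"
proof -
  define \<theta> where "\<theta> = \<gamma> * deg \<sigma>"
  obtain K where K: "\<And>s t. s < t \<Longrightarrow> \<bar>ext (Suc n) s t \<sigma>\<bar> \<le> K * (t-s) powr \<theta>"
    using germ_sewing(2)[OF I \<sigma> N] ext_new_degree[OF \<sigma> N] unfolding \<theta>_def by auto
  obtain C where C: "C \<ge> 0" "\<And>s u t L. \<bar>u-s\<bar> \<le> L \<Longrightarrow> \<bar>t-u\<bar> \<le> L \<Longrightarrow>
      \<bar>red_sum deg comult (ext n s u) (ext n u t) \<sigma>\<bar> \<le> C * L powr \<theta>"
    using red_sum_regular[of \<gamma> \<sigma> "ext n"] \<gamma>_pos ext_invariantD(4)[OF I] \<sigma> unfolding \<theta>_def by auto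
  have diag: "ext (Suc n) s s \<sigma> = 0" for s
    using ext_Suc_chen[OF I _ N, of \<sigma> s s s] \<sigma> conv_idempotent_eq_0[of "Suc n" "ext (Suc n) s s" \<sigma>]
      ext_Suc_chen[OF I _ N] ext_invariantD(1)[OF I] by auto
  \<comment> \<open>For t < s, Chen's relation on the loop s \<rightarrow> t \<rightarrow> s reduces to the case s < t.\<close>
  have "\<bar>ext (Suc n) s t \<sigma>\<bar> \<le> (\<bar>K\<bar> + C) * \<bar>t-s\<bar> powr \<theta>" for s t
  proof (cases s t rule: linorder_cases)
    case less
    then show ?thesis using K[OF less] C(1) by (smt (verit) mult_right_mono powr_ge_zero)
  next
    case equal
    then show ?thesis using diag by simp
  next
    case greater
    have "ext (Suc n) s t \<sigma> = - ext (Suc n) t s \<sigma> - red_sum deg comult (ext n s t) (ext n t s) \<sigma>"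
      using ext_Suc_split[OF I \<sigma> N, of s s t] diag[of s] by simp
    moreover have "\<bar>ext (Suc n) t s \<sigma>\<bar> \<le> \<bar>K\<bar> * \<bar>t-s\<bar> powr \<theta>"
      using K[OF greater] greater by (smt (verit) mult_right_mono powr_ge_zero)
    moreover have "\<bar>red_sum deg comult (ext n s t) (ext n t s) \<sigma>\<bar> \<le> C * \<bar>t-s\<bar> powr \<theta>"
      using C(2) by (auto simp: abs_minus_commute)
    ultimately show ?thesis by (simp add: algebra_simps)
  qed
  then show ?thesis unfolding regular_def \<theta>_def by blast
qed

lemma ext_Suc_mult:
  assumes I: "ext_invariant n" and ab: "deg a + deg b = Suc n" and N: "N \<le> n"
  shows "mult_val (ext (Suc n) s t) a b = ext (Suc n) s t a * ext (Suc n) s t b"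
proof (cases "a = one \<or> b = one")
  case True
  have "ext (Suc n) s t one = 1" using ext_invariantD(1)[OF I] by simp
  with True show ?thesis by (auto simp: mult_val_one_left mult_val_one_right simp del: ext.simps)
next
  case False
  then have "deg a \<noteq> 0" "deg b \<noteq> 0" by (simp_all add: deg_eq_0_iff)
  then have deg: "0 < deg a" "0 < deg b" "deg a \<le> n" "deg b \<le> n" using ab by auto
  define E where "E = ext (Suc n)"
  define D where "D s t = mult_val (E s t) a b - E s t a * E s t b" for s t
  have lower: "mult_val (E s t) x y = E s t x * E s t y" if "deg x + deg y < deg a + deg b" for s t x y
  proof -
    have "mult_val (E s t) x y = mult_val (ext n s t) x y"
      unfolding E_def by (rule mult_val_cong) (use that ab in auto)
    then show ?thesis unfolding E_def using ext_invariantD(3)[OF I, of x y] that ab by simp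
  qed
  have E_one: "E s t one = 1" for s t unfolding E_def using ext_invariantD(1)[OF I] by simp
  \<comment> \<open>The multiplicativity defect in the top degree is additive, because the lower defects vanish.\<close>
  have "D s t = D s u + D u t" for s u t
  proof -
    have "mult_val (E s t) a b = mult_val (conv (E s u) (E u t)) a b"
      unfolding E_def by (rule mult_val_cong) (use ext_Suc_chen[OF I _ N] ab in auto)
    moreover have "E s t x = conv (E s u) (E u t) x" if "deg x \<le> Suc n" for x
      unfolding E_def using ext_Suc_chen[OF I that N] .
    moreover have "mult_val (conv (E s u) (E u t)) a b - conv (E s u) (E u t) a * conv (E s u) (E u t) b
        = D s u + D u t"
      unfolding D_def using E_one lower deg by (intro mult_defect_conv) auto
    ultimately show ?thesis unfolding D_def using deg by simp
  qed
  moreover have "regular (\<gamma> * deg a + \<gamma> * deg b) D"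
  proof -
    have \<theta>: "\<gamma> * deg a + \<gamma> * deg b = \<gamma> * deg c" if "deg c = Suc n" for c
      using ab that by (metis distrib_left of_nat_add)
    have "regular (\<gamma> * deg a + \<gamma> * deg b) (\<lambda>s t. \<Sum>c\<in>Bn deg (deg a + deg b). real (mult a b c) * E s t c)"
      using ext_Suc_regular[OF I _ N] ab unfolding E_def
      by (intro regular_sum finite_Bn regular_scaleR) (use ext_Suc_regular[OF I _ N] \<theta> in \<open>auto simp del: ext.simps\<close>)
    moreover have "regular (\<gamma> * deg a + \<gamma> * deg b) (\<lambda>s t. E s t a * E s t b)"
      unfolding E_def using ext_invariantD(4)[OF I] deg by (intro regular_mult) auto
    ultimately show ?thesis unfolding D_def mult_val_def by (rule regular_minus)
  qed
  then obtain K where "\<And>s t. \<bar>D s t\<bar> \<le> K * \<bar>t-s\<bar> powr (\<gamma> * deg a + \<gamma> * deg b)"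
    unfolding regular_def by blast
  moreover have "1 < \<gamma> * deg a + \<gamma> * deg b"
    using one_less_\<gamma>_mult[of "Suc n"] N ab by (simp add: distrib_left[symmetric] of_nat_add[symmetric])
  ultimately have "D s t = 0" by (intro additive_regular_eq_0) auto
  then show ?thesis unfolding D_def E_def by simp
qed

lemma ext_invariant_Suc:
  assumes I: "ext_invariant n" and N: "N \<le> n"
  shows "ext_invariant (Suc n)"
  unfolding ext_invariant_def
proof (intro conjI allI impI)
  fix s t a b assume ab: "deg a + deg b \<le> Suc n"
  show "mult_val (ext (Suc n) s t) a b = ext (Suc n) s t a * ext (Suc n) s t b"
  proof (cases "deg a + deg b = Suc n")
    case False
    then have "deg a + deg b \<le> n" using ab by simp
    moreover have "mult_val (ext (Suc n) s t) a b = mult_val (ext n s t) a b"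
      by (rule mult_val_cong) (use \<open>deg a + deg b \<le> n\<close> in auto)
    ultimately show ?thesis using ext_invariantD(3)[OF I] by simp
  qed (rule ext_Suc_mult[OF I _ N])
next
  fix \<sigma> assume \<sigma>: "0 < deg \<sigma>" "deg \<sigma> \<le> Suc n"
  show "regular (\<gamma> * deg \<sigma>) (\<lambda>s t. ext (Suc n) s t \<sigma>)"
  proof (cases "deg \<sigma> = Suc n")
    case False
    then show ?thesis using ext_invariantD(4)[OF I \<sigma>(1)] \<sigma> by simp
  qed (rule ext_Suc_regular[OF I _ N])
qed (use ext_invariantD(1)[OF I] ext_Suc_chen[OF I _ N] in auto)

lemma ext_invariant: "ext_invariant n"
proof (induction n)
  case (Suc n)
  then show ?case
    using ext_invariant_le_N[of "Suc n"] ext_invariant_Suc[of n] by (cases "Suc n \<le> N") auto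
qed (rule ext_invariant_le_N, simp)

definition extension :: "real \<Rightarrow> real \<Rightarrow> 'a \<Rightarrow> real" where
  "extension s t \<sigma> = ext (deg \<sigma>) s t \<sigma>"

lemma extension_eq_ext: "deg \<sigma> \<le> n \<Longrightarrow> extension s t \<sigma> = ext n s t \<sigma>"
  unfolding extension_def by (rule ext_stable[symmetric])

lemma extension_extends: "extends_trunc N deg extension Y"
  unfolding extends_trunc_def extension_def using ext_le_N by simp

lemma extension_rough_path: "rough_path \<gamma> one deg mult comult extension"
  unfolding rough_path_def
proof (intro conjI allI)
  fix s t show "extension s t one = 1"
    using extension_eq_ext[of one 0] ext_invariantD(1)[OF ext_invariant] by simp
next
  fix s t a b
  have "(\<Sum>c\<in>Bn deg (deg a + deg b). real (mult a b c) * extension s t c) = mult_val (ext (deg a + deg b) s t) a b"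
    unfolding mult_val_def by (intro sum.cong refl) (simp add: extension_eq_ext)
  also have "\<dots> = extension s t a * extension s t b"
    using ext_invariantD(3)[OF ext_invariant] extension_eq_ext[of a "deg a + deg b"] extension_eq_ext[of b "deg a + deg b"]
    by simp
  finally show "(\<Sum>c\<in>Bn deg (deg a + deg b). real (mult a b c) * extension s t c) = extension s t a * extension s t b" .
next
  fix s u t c
  have "extension s t c = conv (ext (deg c) s u) (ext (deg c) u t) c"
    unfolding extension_def by (rule ext_invariantD(2)[OF ext_invariant]) simp
  also have "\<dots> = conv (extension s u) (extension u t) c"
    by (rule conv_cong) (simp_all add: extension_eq_ext)
  finally show "extension s t c = (\<Sum>a\<in>Ble deg (deg c). \<Sum>b\<in>Ble deg (deg c).
      real (comult a b c) * extension s u a * extension u t b)"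
    unfolding conv_def .
next
  fix \<sigma>
  show "\<exists>K. \<forall>s t. s \<noteq> t \<longrightarrow> \<bar>extension s t \<sigma>\<bar> \<le> K * \<bar>t - s\<bar> powr (\<gamma> * deg \<sigma>)"
  proof (cases "deg \<sigma> = 0")
    case True
    then show ?thesis
      using extension_eq_ext[of \<sigma> 0] ext_invariantD(1)[OF ext_invariant] by (intro exI[of _ 1]) (auto simp: deg_eq_0_iff)
  next
    case False
    then have "regular (\<gamma> * deg \<sigma>) (\<lambda>s t. extension s t \<sigma>)"
      unfolding extension_def by (intro ext_invariantD(4)[OF ext_invariant]) auto
    then show ?thesis unfolding regular_def by blast
  qed
qed

end

theorem mainTheorem3:
  fixes one :: 'b and deg :: "'b \<Rightarrow> nat" and mult comult :: "'b \<Rightarrow> 'b \<Rightarrow> 'b \<Rightarrow> nat"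
    and \<gamma> :: real and N :: nat and Y :: "real \<Rightarrow> real \<Rightarrow> 'b \<Rightarrow> real"
  assumes "comb_hopf one deg mult comult"
    and "commutative_hopf mult"
    and "nondegenerate one deg comult"
    and "0 < \<gamma>" and "\<gamma> \<le> 1"
    and "N = nat \<lfloor>1 / \<gamma>\<rfloor>"
    and "trunc_rough_path \<gamma> N one deg mult comult Y"
  shows "(\<exists>!X. rough_path \<gamma> one deg mult comult X \<and> extends_trunc N deg X Y)
       \<and> (\<forall>X. rough_path \<gamma> one deg mult comult X \<and> extends_trunc N deg X Y \<longrightarrow>
            (\<exists>c>0. \<forall>s t \<sigma>. \<bar>X s t \<sigma>\<bar> \<le> c ^ deg \<sigma> * qgamma \<gamma> N deg comult \<sigma>
                                          * hpow \<bar>t - s\<bar> (\<gamma> * real (deg \<sigma>))))"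
proof -
  interpret truncated_rough_path one deg mult comult \<gamma> N Y
    using assms by unfold_locales auto
  have "X = extension" if "rough_path \<gamma> one deg mult comult X" "extends_trunc N deg X Y" for X
    using rough_path_unique[OF that(1) extension_rough_path] that(2) extension_extends
    unfolding extends_trunc_def by fastforce
  then have "\<exists>!X. rough_path \<gamma> one deg mult comult X \<and> extends_trunc N deg X Y"
    using extension_rough_path extension_extends by blast
  moreover have "\<exists>c>0. \<forall>s t \<sigma>. \<bar>X s t \<sigma>\<bar> \<le> c ^ deg \<sigma> * qgamma \<gamma> N deg comult \<sigma>
                         * hpow \<bar>t - s\<bar> (\<gamma> * real (deg \<sigma>))"
    if "rough_path \<gamma> one deg mult comult X" for X
    using rough_path_qgamma_bound[OF assms(3) that] .
  ultimately show ?thesis by blast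
qed

end
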